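(* For any constellation $[\mathbb{X},\mathbb{P}]$ (natural binary code labeling, bit probabilities $P_{C_k}(0)\in(0,1)$), the low-GMI parameters $[\boldsymbol{\mu},E_s,\alpha]$ of $[\mathbb{X},\mathbb{P}]$ are equal to the low-GMI parameters of the constellation $[\mathring{\mathbb{X}},\mathbb{U}_m]$, where $\mathring{\mathbb{X}}$ is the transform of $\mathbb{X}$ with respect to the bit probabilities of $\mathbb{P}$ and $\mathbb{U}_m$ is the uniform distribution.
   Context: Let $m\ge1$, $M=2^m$, $N\ge1$. For $0\le i\le M-1$, $n_{i,k}\in\{0,1\}$ is the $k$-th bit of $i$ ($i=\sum_k n_{i,k}2^k$), and $\bar b=1-b$. A constellation $[\mathbb{X},\mathbb{P}]$ consists of an alphabet $\mathbb{X}$ with rows $\boldsymbol{x}_0,\ldots,\boldsymbol{x}_{M-1}\in\mathbb{R}^N$, symbol $\boldsymbol{x}_i$ carrying the label $(n_{i,0},\ldots,n_{i,m-1})$, and distribution $P_i=\prod_kP_{C_k}(n_{i,k})$ determined by bit probabilities $P_{C_k}(0)$, $P_{C_k}(1)=1-P_{C_k}(0)$; i.e. independent bits $C_k$ with $\Pr(C_k=u)=P_{C_k}(u)$ select $\boldsymbol{X}=\boldsymbol{x}_i$, $i=\sum_kC_k2^k$. $\mathbb{U}_m$ is the case $P_{C_k}(0)=1/2$ for all $k$ (all $P_i=1/M$). The transform $\mathring{\mathbb{X}}$ has rows $\mathring{\boldsymbol{x}}_i=\sum_j\boldsymbol{x}_j\gamma_{i,j}\sqrt{P_j}$ with $\gamma_{i,j}=\prod_{k}\big[(-1)^{\bar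 n_{i,k}n_{j,k}}\sqrt{P_{C_k}(0)}+(-1)^{n_{i,k}\bar n_{j,k}}\sqrt{P_{C_k}(1)}\big]$. Channel: $\boldsymbol{Y}=\boldsymbol{H}\circ\boldsymbol{X}+\boldsymbol{Z}$, $\boldsymbol{Z}$ zero-mean Gaussian with variance $N_0/2$ per dimension, $\boldsymbol{H}$ real fading vector with common marginal pdf $p_H$, known at the receiver (standard regularity conditions assumed). $\mathrm{SNR}=\mathbb{E}[H^2]E_s/N_0$. BICM-GMI: $I(\mathrm{SNR})=\sum_kI(C_k;\boldsymbol{Y}\mid\boldsymbol{H})$ in bits, as a function of SNR. Low-GMI parameters: $\boldsymbol{\mu}=\mathbb{E}[\boldsymbol{X}]$, $E_s=\mathbb{E}[\|\boldsymbol{X}\|^2]$, $\alpha=\frac{dI}{d\,\mathrm{SNR}}\big|_{\mathrm{SNR}=0}$. *)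

theory Defs
  imports "HOL-Analysis.Analysis" "HOL-Probability.Probability"
begin

text \<open>Natural binary code: k-th bit of symbol index i.\<close>
definition nbit :: "nat \<Rightarrow> nat \<Rightarrow> nat" where
  "nbit i k = (i div 2 ^ k) mod 2"

definition bitprob :: "(nat \<Rightarrow> real) \<Rightarrow> nat \<Rightarrow> nat \<Rightarrow> real" where
  "bitprob p k u = (if u = 0 then p k else 1 - p k)"

definition symprob :: "nat \<Rightarrow> (nat \<Rightarrow> real) \<Rightarrow> nat \<Rightarrow> real" where
  "symprob m p i = (\<Prod>k<m. bitprob p k (nbit i k))"

definition uniform_bits :: "nat \<Rightarrow> real" where
  "uniform_bits k = 1 / 2"

definition gamma_coef :: "nat \<Rightarrow> (nat \<Rightarrow> real) \<Rightarrow> nat \<Rightarrow> nat \<Rightarrow> real" where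
  "gamma_coef m p i j = (\<Prod>k<m.
      (-1) ^ ((1 - nbit i k) * nbit j k) * sqrt (p k)
    + (-1) ^ (nbit i k * (1 - nbit j k)) * sqrt (1 - p k))"

definition transform :: "nat \<Rightarrow> (nat \<Rightarrow> real) \<Rightarrow> (nat \<Rightarrow> real ^ 'n) \<Rightarrow> nat \<Rightarrow> real ^ 'n" where
  "transform m p x i = (\<Sum>j<2 ^ m. (gamma_coef m p i j * sqrt (symprob m p j)) *\<^sub>R x j)"

definition mean_sym :: "nat \<Rightarrow> (nat \<Rightarrow> real) \<Rightarrow> (nat \<Rightarrow> real ^ 'n) \<Rightarrow> real ^ 'n" where
  "mean_sym m p x = (\<Sum>i<2 ^ m. symprob m p i *\<^sub>R x i)"

definition energy_sym :: "nat \<Rightarrow> (nat \<Rightarrow> real) \<Rightarrow> (nat \<Rightarrow> real ^ 'n) \<Rightarrow> real" where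
  "energy_sym m p x = (\<Sum>i<2 ^ m. symprob m p i * (norm (x i))\<^sup>2)"

text \<open>Channel transition density p(y | X = xv, H = h), noise variance N0/2 per dimension.\<close>
definition gauss_ch :: "real \<Rightarrow> real ^ 'n \<Rightarrow> real ^ 'n \<Rightarrow> real ^ 'n \<Rightarrow> real" where
  "gauss_ch N0 h xv y = (\<Prod>n\<in>UNIV. exp (- ((y $ n - h $ n * xv $ n)\<^sup>2) / N0) / sqrt (pi * N0))"

definition out_dens :: "nat \<Rightarrow> (nat \<Rightarrow> real) \<Rightarrow> (nat \<Rightarrow> real ^ 'n) \<Rightarrow> real
    \<Rightarrow> real ^ 'n \<Rightarrow> real ^ 'n \<Rightarrow> real" where
  "out_dens m p x N0 h y = (\<Sum>i<2 ^ m. symprob m p i * gauss_ch N0 h (x i) y)"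

definition cond_dens :: "nat \<Rightarrow> (nat \<Rightarrow> real) \<Rightarrow> (nat \<Rightarrow> real ^ 'n) \<Rightarrow> real
    \<Rightarrow> nat \<Rightarrow> nat \<Rightarrow> real ^ 'n \<Rightarrow> real ^ 'n \<Rightarrow> real" where
  "cond_dens m p x N0 k u h y =
     (\<Sum>i\<in>{i. i < 2 ^ m \<and> nbit i k = u}. symprob m p i * gauss_ch N0 h (x i) y) / bitprob p k u"

text \<open>I(C_k; Y | H) in bits, H distributed according to HD (independent of X).\<close>
definition bit_mi :: "nat \<Rightarrow> (nat \<Rightarrow> real) \<Rightarrow> (nat \<Rightarrow> real ^ 'n) \<Rightarrow> real
    \<Rightarrow> (real ^ 'n) measure \<Rightarrow> nat \<Rightarrow> real" where
  "bit_mi m p x N0 HD k =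
     (\<integral>h. (\<Sum>u\<in>{0, 1}. bitprob p k u *
        (\<integral>y. cond_dens m p x N0 k u h y *
               log 2 (cond_dens m p x N0 k u h y / out_dens m p x N0 h y) \<partial>lborel)) \<partial>HD)"

definition bicm_gmi :: "nat \<Rightarrow> (nat \<Rightarrow> real) \<Rightarrow> (nat \<Rightarrow> real ^ 'n) \<Rightarrow> real
    \<Rightarrow> (real ^ 'n) measure \<Rightarrow> real" where
  "bicm_gmi m p x N0 HD = (\<Sum>k<m. bit_mi m p x N0 HD k)"

definition sec_moment :: "(real \<Rightarrow> real) \<Rightarrow> real" where
  "sec_moment pH = (\<integral>t. t\<^sup>2 * pH t \<partial>lborel)"

text \<open>GMI as a function of SNR = E[H^2] E_s / N0; value 0 at SNR = 0.\<close>
definition gmi_of_snr :: "nat \<Rightarrow> (nat \<Rightarrow> real) \<Rightarrow> (nat \<Rightarrow> real ^ 'n) \<Rightarrow> real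
    \<Rightarrow> (real ^ 'n) measure \<Rightarrow> real \<Rightarrow> real" where
  "gmi_of_snr m p x EH2 HD snr =
     (if snr \<le> 0 then 0 else bicm_gmi m p x (EH2 * energy_sym m p x / snr) HD)"

definition low_gmi_alpha :: "nat \<Rightarrow> (nat \<Rightarrow> real) \<Rightarrow> (nat \<Rightarrow> real ^ 'n) \<Rightarrow> real
    \<Rightarrow> (real ^ 'n) measure \<Rightarrow> real \<Rightarrow> bool" where
  "low_gmi_alpha m p x EH2 HD a \<longleftrightarrow>
     (gmi_of_snr m p x EH2 HD has_real_derivative a) (at 0 within {0..})"

end

theory Submission
  imports Defs
begin

(* The coefficients gamma_ij of the transform factor bit by bit, and for every bit the 2 x 2 matrix
   of factors is sqrt 2 times an orthogonal matrix.  Averaging the transformed alphabet over the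
   uniform distribution therefore reproduces the mean and the energy of [X, P].

   For the slope alpha, N0 times the mutual information of bit k (given the fading h) tends, as
   N0 -> oo, to  sum_u P_k(u) ||h * (E[X | C_k = u] - mu)||^2 / ln 2:  the relative entropy of each
   conditional Gaussian mixture from the Gaussian at its mean is squeezed between 0 and its
   chi^2-divergence, which is o(1/N0).  Dominated convergence over the fading gives
   alpha = sum_k ||R_k||^2 / (E_s ln 2)  with the bit contrast
   R_k = sqrt (P_k(0) P_k(1)) (E[X | C_k = 0] - E[X | C_k = 1]) = sum_j P_j rho_k(j_k) x_j,
   and rho_k is +1 or -1 for uniform bits, which makes R_k invariant under the transform as well. *)

section \<open>Natural binary code\<close>

lemma nbit_0_or_1: "nbit i k = 0 \<or> nbit i k = 1"
  unfolding nbit_def by presburger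

lemma nbit_eq_0_if_less_pow:
  assumes "i < 2 ^ m" and "m \<le> k"
  shows "nbit i k = 0"
proof -
  have "i < 2 ^ k"
    using assms by (meson less_le_trans one_le_numeral power_increasing)
  then show ?thesis by (simp add: nbit_def)
qed

lemma nbit_add_pow:
  assumes "i < 2 ^ m"
  shows "nbit (i + 2 ^ m) k = (if k = m then 1 else nbit i k)"
proof (cases "k < m")
  case True
  have "(2::nat) ^ m = 2 ^ k * (2 * 2 ^ (m - k - 1))"
    using True by (simp flip: power_add power_Suc)
  then have "(i + 2 ^ m) div 2 ^ k = i div 2 ^ k + 2 * 2 ^ (m - k - 1)" by simp
  then show ?thesis using True by (simp add: nbit_def)
next
  case False
  have "i + 2 ^ m < 2 ^ Suc m" using assms by simp
  moreover have "m < k \<Longrightarrow> (2::nat) ^ Suc m \<le> 2 ^ k" by (intro power_increasing) auto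
  ultimately show ?thesis
    using False assms by (cases "k = m") (auto simp: nbit_def)
qed

lemma sum_prod_nbit:
  fixes f :: "nat \<Rightarrow> nat \<Rightarrow> 'a::comm_semiring_1"
  shows "(\<Sum>i<2 ^ m. \<Prod>k<m. f k (nbit i k)) = (\<Prod>k<m. f k 0 + f k 1)"
proof (induction m)
  case (Suc m)
  let ?g = "\<lambda>i. \<Prod>k<Suc m. f k (nbit i k)"
  let ?S = "\<Sum>i<2 ^ m. \<Prod>k<m. f k (nbit i k)"
  have "(\<Sum>i<2 ^ Suc m. ?g i) = (\<Sum>i<2 ^ m. ?g i) + (\<Sum>i<2 ^ m. ?g (i + 2 ^ m))"
    using sum.atLeastLessThan_concat[of 0 "2 ^ m" "2 ^ m + 2 ^ m" ?g]
      sum.shift_bounds_nat_ivl[of ?g 0 "2 ^ m" "2 ^ m"]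
    by (simp add: atLeast0LessThan mult_2)
  also have "\<dots> = ?S * f m 0 + ?S * f m 1"
  proof -
    have "(\<Prod>k<m. f k (nbit (i + 2 ^ m) k)) = (\<Prod>k<m. f k (nbit i k))" if "i < 2 ^ m" for i
      using that by (intro prod.cong) (auto simp: nbit_add_pow)
    then show ?thesis
      by (simp add: sum_distrib_right nbit_eq_0_if_less_pow nbit_add_pow)
  qed
  finally show ?case by (simp add: Suc distrib_left)
qed simp

lemma nbit_eq_imp_eq:
  assumes "j < 2 ^ m" "l < 2 ^ m" "\<forall>k<m. nbit j k = nbit l k"
  shows "j = l"
proof -
  have "nbit j n = nbit l n" for n
    using assms by (cases "n < m") (auto simp: nbit_eq_0_if_less_pow)
  then have "bit j n = bit l n" for n
    by (simp add: nbit_def bit_iff_odd odd_iff_mod_2_eq_one)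
  then show ?thesis by (simp add: bit_eq_iff)
qed

section \<open>Orthogonality of the transform\<close>

lemma real_sqrt_prod: "sqrt (prod f A) = (\<Prod>k\<in>A. sqrt (f k))"
  by (induction A rule: infinite_finite_induct) (auto simp: real_sqrt_mult)

lemma symprob_nonneg: "\<forall>k<m. 0 \<le> p k \<and> p k \<le> 1 \<Longrightarrow> 0 \<le> symprob m p i"
  unfolding symprob_def bitprob_def by (intro prod_nonneg) auto

lemma sqrt_symprob: "sqrt (symprob m p j) = (\<Prod>k<m. sqrt (bitprob p k (nbit j k)))"
  by (simp add: symprob_def real_sqrt_prod)

lemma symprob_uniform_bits: "symprob m uniform_bits i = (1 / 2) ^ m"
proof -
  have "symprob m uniform_bits i = (\<Prod>k<m. 1 / 2)"
    unfolding symprob_def by (intro prod.cong refl) (simp add: bitprob_def uniform_bits_def)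
  then show ?thesis by simp
qed

definition gamma_factor :: "(nat \<Rightarrow> real) \<Rightarrow> nat \<Rightarrow> nat \<Rightarrow> nat \<Rightarrow> real" where
  "gamma_factor p k c d = (-1) ^ ((1 - c) * d) * sqrt (p k) + (-1) ^ (c * (1 - d)) * sqrt (1 - p k)"

lemma gamma_coef_eq_prod: "gamma_coef m p i j = (\<Prod>k<m. gamma_factor p k (nbit i k) (nbit j k))"
  by (simp add: gamma_coef_def gamma_factor_def)

lemma gamma_factor_orthogonal:
  assumes "0 \<le> p k" "p k \<le> 1" "d = 0 \<or> d = 1" "e = 0 \<or> e = 1"
  shows "gamma_factor p k 0 d * gamma_factor p k 0 e + gamma_factor p k 1 d * gamma_factor p k 1 e
    = (if d = e then 2 else 0)"
proof -
  have "sqrt (p k) * sqrt (p k) = p k" "sqrt (1 - p k) * sqrt (1 - p k) = 1 - p k"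
    using assms by auto
  then show ?thesis using assms by (auto simp: gamma_factor_def algebra_simps)
qed

lemma sum_gamma_coef_orthonormal:
  assumes "\<forall>k<m. 0 \<le> p k \<and> p k \<le> 1" "j < 2 ^ m" "l < 2 ^ m"
  shows "(\<Sum>i<2 ^ m. (1 / 2) ^ m * (gamma_coef m p i j * gamma_coef m p i l)) = (if j = l then 1 else 0)"
proof -
  have "(\<Sum>i<2 ^ m. (1 / 2) ^ m * (gamma_coef m p i j * gamma_coef m p i l))
      = (\<Sum>i<2 ^ m. \<Prod>k<m.
           gamma_factor p k (nbit i k) (nbit j k) * gamma_factor p k (nbit i k) (nbit l k) / 2)"
    by (simp add: gamma_coef_eq_prod prod_dividef power_one_over prod.distrib)
  also have "\<dots> = (\<Prod>k<m. gamma_factor p k 0 (nbit j k) * gamma_factor p k 0 (nbit l k) / 2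
         + gamma_factor p k 1 (nbit j k) * gamma_factor p k 1 (nbit l k) / 2)"
    by (rule sum_prod_nbit)
  also have "\<dots> = (\<Prod>k<m. if nbit j k = nbit l k then 1 else 0)"
    using assms(1) gamma_factor_orthogonal[OF _ _ nbit_0_or_1 nbit_0_or_1]
    by (intro prod.cong refl) (simp flip: add_divide_distrib)
  also have "\<dots> = (if j = l then 1 else 0)"
    using nbit_eq_imp_eq[OF assms(2,3)] by (auto simp: prod_zero_iff)
  finally show ?thesis .
qed

lemma gamma_factor_sum_sqrt:
  assumes "0 \<le> p k" "p k \<le> 1" "d = 0 \<or> d = 1"
  shows "(gamma_factor p k 0 d + gamma_factor p k 1 d) / 2 * sqrt (bitprob p k d) = bitprob p k d"
  using assms by (auto simp: gamma_factor_def bitprob_def algebra_simps)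

text \<open>For uniform bits the contrast is \<open>+1\<close> or \<open>-1\<close>; this is why the transform preserves
  \<open>bit_contrast_vec\<close>.\<close>
definition bit_contrast :: "(nat \<Rightarrow> real) \<Rightarrow> nat \<Rightarrow> nat \<Rightarrow> real" where
  "bit_contrast p k c = (if c = 0 then sqrt (1 - p k) / sqrt (p k) else - sqrt (p k) / sqrt (1 - p k))"

lemma gamma_factor_diff_sqrt:
  assumes "0 < p k" "p k < 1" "d = 0 \<or> d = 1"
  shows "(gamma_factor p k 0 d - gamma_factor p k 1 d) / 2 * sqrt (bitprob p k d)
    = bitprob p k d * bit_contrast p k d"
proof -
  have "sqrt (p k) > 0" "sqrt (1 - p k) > 0" "sqrt (p k) ^ 2 = p k" "sqrt (1 - p k) ^ 2 = 1 - p k"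
    using assms by auto
  then show ?thesis
    using assms(3) by (auto simp: gamma_factor_def bitprob_def bit_contrast_def field_simps power2_eq_square)
qed

text \<open>With \<open>w = 1\<close> this gives the mean of the uniform constellation, with \<open>w = \<plusminus>1\<close> on one bit
  its contrast vector.\<close>
lemma sum_transform_bitwise:
  "(\<Sum>i<2 ^ m. (\<Prod>k<m. w k (nbit i k) / 2) *\<^sub>R transform m p x i)
    = (\<Sum>j<2 ^ m. (\<Prod>k<m. (w k 0 * gamma_factor p k 0 (nbit j k) + w k 1 * gamma_factor p k 1 (nbit j k))
         / 2 * sqrt (bitprob p k (nbit j k))) *\<^sub>R x j)"
proof -
  let ?f = "\<lambda>j k c. w k c / 2 * (gamma_factor p k c (nbit j k) * sqrt (bitprob p k (nbit j k)))"
  have coef: "(\<Prod>k<m. w k (nbit i k) / 2) * (gamma_coef m p i j * sqrt (symprob m p j))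
      = (\<Prod>k<m. ?f j k (nbit i k))" for i j
    unfolding gamma_coef_eq_prod sqrt_symprob prod.distrib by (simp only: mult.assoc)
  have "(\<Sum>i<2 ^ m. (\<Prod>k<m. w k (nbit i k) / 2) *\<^sub>R transform m p x i)
      = (\<Sum>j<2 ^ m. (\<Sum>i<2 ^ m. \<Prod>k<m. ?f j k (nbit i k)) *\<^sub>R x j)"
    unfolding transform_def scaleR_sum_right scaleR_scaleR coef
    by (subst sum.swap) (simp add: scaleR_sum_left)
  also have "\<dots> = (\<Sum>j<2 ^ m. (\<Prod>k<m. ?f j k 0 + ?f j k 1) *\<^sub>R x j)"
    by (rule sum.cong[OF refl], rule arg_cong2[where f = scaleR, OF sum_prod_nbit refl])
  finally show ?thesis by (simp add: algebra_simps add_divide_distrib)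
qed

lemma mean_sym_transform:
  assumes "\<forall>k<m. 0 \<le> p k \<and> p k \<le> 1"
  shows "mean_sym m uniform_bits (transform m p x) = mean_sym m p x"
proof -
  have "mean_sym m uniform_bits (transform m p x) = (\<Sum>i<2 ^ m. (\<Prod>k<m. 1 / 2) *\<^sub>R transform m p x i)"
    by (simp add: mean_sym_def symprob_uniform_bits)
  also have "\<dots> = (\<Sum>j<2 ^ m. (\<Prod>k<m. (gamma_factor p k 0 (nbit j k) + gamma_factor p k 1 (nbit j k))
         / 2 * sqrt (bitprob p k (nbit j k))) *\<^sub>R x j)"
    using sum_transform_bitwise[of "\<lambda>_ _. 1"] by simp
  also have "\<dots> = mean_sym m p x"
    unfolding mean_sym_def symprob_def using assms gamma_factor_sum_sqrt[OF _ _ nbit_0_or_1]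
    by (intro sum.cong prod.cong refl arg_cong2[where f = scaleR]) auto
  finally show ?thesis .
qed

lemma inner_sum_scaleR_sum_scaleR:
  "(\<Sum>j\<in>A. a j *\<^sub>R (v j :: 'a::real_inner)) \<bullet> (\<Sum>l\<in>A. a l *\<^sub>R v l)
    = (\<Sum>j\<in>A. \<Sum>l\<in>A. a j * a l * (v j \<bullet> v l))"
  unfolding inner_sum_left inner_scaleR_left inner_sum_right inner_scaleR_right sum_distrib_left
  by (subst sum.swap) (simp add: inner_commute mult.left_commute mult.assoc)

lemma energy_sym_transform:
  assumes "\<forall>k<m. 0 \<le> p k \<and> p k \<le> 1"
  shows "energy_sym m uniform_bits (transform m p x) = energy_sym m p x"
proof -
  let ?s = "\<lambda>j. sqrt (symprob m p j)"
  let ?\<gamma> = "gamma_coef m p"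
  have "energy_sym m uniform_bits (transform m p x)
      = (\<Sum>i<2 ^ m. \<Sum>j<2 ^ m. \<Sum>l<2 ^ m.
           (1 / 2) ^ m * (?\<gamma> i j * ?\<gamma> i l) * (?s j * ?s l * (x j \<bullet> x l)))"
    unfolding energy_sym_def transform_def symprob_uniform_bits power2_norm_eq_inner
      inner_sum_scaleR_sum_scaleR sum_distrib_left
    by (intro sum.cong refl) (simp only: mult_ac)
  also have "\<dots> = (\<Sum>j<2 ^ m. \<Sum>l<2 ^ m.
           (\<Sum>i<2 ^ m. (1 / 2) ^ m * (?\<gamma> i j * ?\<gamma> i l)) * (?s j * ?s l * (x j \<bullet> x l)))"
    unfolding sum_distrib_right by (subst sum.swap) (rule sum.cong[OF refl], rule sum.swap)
  also have "\<dots> = (\<Sum>j<2 ^ m. \<Sum>l<2 ^ m. if j = l then ?s j * ?s l * (x j \<bullet> x l) else 0)"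
    by (intro sum.cong refl) (simp add: sum_gamma_coef_orthonormal[OF assms])
  also have "\<dots> = (\<Sum>j<2 ^ m. ?s j * ?s j * (x j \<bullet> x j))"
    by (simp add: sum.delta)
  also have "\<dots> = energy_sym m p x"
    unfolding energy_sym_def using assms
    by (intro sum.cong refl) (simp add: symprob_nonneg power2_norm_eq_inner)
  finally show ?thesis .
qed

definition bit_contrast_vec :: "nat \<Rightarrow> (nat \<Rightarrow> real) \<Rightarrow> (nat \<Rightarrow> real ^ 'n) \<Rightarrow> nat \<Rightarrow> real ^ 'n" where
  "bit_contrast_vec m p x k = (\<Sum>j<2 ^ m. (symprob m p j * bit_contrast p k (nbit j k)) *\<^sub>R x j)"

lemma bit_contrast_vec_transform:
  assumes "\<forall>k<m. 0 < p k \<and> p k < 1" and "k < m"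
  shows "bit_contrast_vec m uniform_bits (transform m p x) k = bit_contrast_vec m p x k"
proof -
  define w where "w k' c = (if k' = k then if c = 0 then 1 else - 1 else 1 :: real)" for k' c :: nat
  have lhs: "symprob m uniform_bits i * bit_contrast uniform_bits k (nbit i k) = (\<Prod>k'<m. w k' (nbit i k') / 2)"
    for i
  proof -
    have "(\<Prod>k'<m. w k' (nbit i k') / 2) = (1 / 2) ^ m * (\<Prod>k'<m. w k' (nbit i k'))"
      by (simp add: prod_dividef power_one_over)
    also have "(\<Prod>k'<m. w k' (nbit i k')) = w k (nbit i k)"
      using assms(2) by (simp add: w_def prod.delta)
    finally show ?thesis
      by (simp add: symprob_uniform_bits bit_contrast_def uniform_bits_def w_def)
  qed
  have rhs: "(\<Prod>k'<m. (w k' 0 * gamma_factor p k' 0 (nbit j k') + w k' 1 * gamma_factor p k' 1 (nbit j k'))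
        / 2 * sqrt (bitprob p k' (nbit j k')))
      = symprob m p j * bit_contrast p k (nbit j k)" for j
  proof -
    have "(\<Prod>k'<m. (w k' 0 * gamma_factor p k' 0 (nbit j k') + w k' 1 * gamma_factor p k' 1 (nbit j k'))
          / 2 * sqrt (bitprob p k' (nbit j k')))
        = (\<Prod>k'<m. bitprob p k' (nbit j k') * (if k' = k then bit_contrast p k (nbit j k) else 1))"
      using assms gamma_factor_sum_sqrt[OF _ _ nbit_0_or_1] gamma_factor_diff_sqrt[OF _ _ nbit_0_or_1]
      by (intro prod.cong refl) (auto simp: w_def less_imp_le)
    also have "\<dots> = symprob m p j * bit_contrast p k (nbit j k)"
      using assms(2) by (simp add: prod.distrib symprob_def prod.delta)
    finally show ?thesis .
  qed
  show ?thesis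
    unfolding bit_contrast_vec_def lhs sum_transform_bitwise rhs ..
qed

definition cond_mean :: "nat \<Rightarrow> (nat \<Rightarrow> real) \<Rightarrow> (nat \<Rightarrow> real ^ 'n) \<Rightarrow> nat \<Rightarrow> nat \<Rightarrow> real ^ 'n" where
  "cond_mean m p x k u = (\<Sum>i\<in>{i. i < 2 ^ m \<and> nbit i k = u}. (symprob m p i / bitprob p k u) *\<^sub>R x i)"

lemma sum_lessThan_pow_split_nbit:
  "(\<Sum>i<2 ^ m. g i) = (\<Sum>i\<in>{i. i < 2 ^ m \<and> nbit i k = 0}. g i) + (\<Sum>i\<in>{i. i < 2 ^ m \<and> nbit i k = 1}. g i)"
proof -
  have "{..<2 ^ m} = {i. i < 2 ^ m \<and> nbit i k = 0} \<union> {i. i < 2 ^ m \<and> nbit i k = 1}"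
    using nbit_0_or_1 by auto
  then show ?thesis by (simp add: sum.union_disjoint[symmetric] disjoint_iff)
qed

lemma sum_symprob: "(\<Sum>i<2 ^ m. symprob m p i) = 1"
  unfolding symprob_def by (subst sum_prod_nbit) (simp add: bitprob_def)

lemma sum_symprob_nbit:
  assumes "k < m" "u = 0 \<or> u = 1"
  shows "(\<Sum>i\<in>{i. i < 2 ^ m \<and> nbit i k = u}. symprob m p i) = bitprob p k u"
proof -
  define f where "f k' c = (if k' = k \<and> c \<noteq> u then 0 else bitprob p k' c)" for k' c
  have "(\<Sum>i\<in>{i. i < 2 ^ m \<and> nbit i k = u}. symprob m p i) = (\<Sum>i<2 ^ m. \<Prod>k'<m. f k' (nbit i k'))"
  proof -
    have "(\<Prod>k'<m. f k' (nbit i k')) = (if nbit i k = u then symprob m p i else 0)" for i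
      using assms(1) by (auto simp: f_def symprob_def prod_zero_iff intro: prod.cong)
    then show ?thesis by (simp add: sum.If_cases lessThan_def Collect_conj_eq)
  qed
  also have "\<dots> = (\<Prod>k'<m. f k' 0 + f k' 1)" by (rule sum_prod_nbit)
  also have "\<dots> = (\<Prod>k'<m. if k' = k then bitprob p k u else 1)"
    using assms(2) by (intro prod.cong refl) (auto simp: f_def bitprob_def)
  also have "\<dots> = bitprob p k u" using assms(1) by (simp add: prod.delta)
  finally show ?thesis .
qed

lemma mean_sym_eq_cond_means:
  assumes "0 < p k" "p k < 1"
  shows "mean_sym m p x = bitprob p k 0 *\<^sub>R cond_mean m p x k 0 + bitprob p k 1 *\<^sub>R cond_mean m p x k 1"
  using assms unfolding mean_sym_def cond_mean_def
  by (subst sum_lessThan_pow_split_nbit[of _ _ k]) (simp add: scaleR_sum_right bitprob_def)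

lemma bit_contrast_eq:
  assumes "0 < p k" "p k < 1"
  shows "bit_contrast p k 0 = sqrt (bitprob p k 0 * bitprob p k 1) / bitprob p k 0"
    and "bit_contrast p k 1 = - sqrt (bitprob p k 0 * bitprob p k 1) / bitprob p k 1"
proof -
  define a b where "a = sqrt (p k)" and "b = sqrt (1 - p k)"
  have a: "a > 0" "a * a = p k" and b: "b > 0" "b * b = 1 - p k"
    using assms by (auto simp: a_def b_def)
  have bp: "bitprob p k 0 = a * a" "bitprob p k 1 = b * b"
    using a b by (simp_all add: bitprob_def)
  have sq: "sqrt (bitprob p k 0 * bitprob p k 1) = a * b"
    unfolding bp using a(1) b(1) by (simp add: real_sqrt_mult)
  have "bit_contrast p k 0 = b / a" "bit_contrast p k 1 = - a / b"
    by (simp_all add: bit_contrast_def a_def b_def)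
  then show "bit_contrast p k 0 = sqrt (bitprob p k 0 * bitprob p k 1) / bitprob p k 0"
    and "bit_contrast p k 1 = - sqrt (bitprob p k 0 * bitprob p k 1) / bitprob p k 1"
    unfolding sq unfolding bp using a(1) b(1) by simp_all
qed

lemma bit_contrast_vec_eq_cond_means:
  assumes "0 < p k" "p k < 1"
  shows "bit_contrast_vec m p x k
    = sqrt (bitprob p k 0 * bitprob p k 1) *\<^sub>R (cond_mean m p x k 0 - cond_mean m p x k 1)"
proof -
  define S where "S u = (\<Sum>i\<in>{i. i < 2 ^ m \<and> nbit i k = u}. symprob m p i *\<^sub>R x i)" for u
  have class_sum: "(\<Sum>i\<in>{i. i < 2 ^ m \<and> nbit i k = u}. (symprob m p i * bit_contrast p k (nbit i k)) *\<^sub>R x i)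
      = bit_contrast p k u *\<^sub>R S u" for u
    unfolding S_def scaleR_sum_right by (intro sum.cong refl) simp
  have "cond_mean m p x k u = (1 / bitprob p k u) *\<^sub>R S u" for u
    unfolding cond_mean_def S_def scaleR_sum_right by (intro sum.cong refl) simp
  moreover have "bitprob p k 0 \<noteq> 0" "bitprob p k 1 \<noteq> 0"
    using assms by (auto simp: bitprob_def)
  ultimately show ?thesis
    unfolding bit_contrast_vec_def sum_lessThan_pow_split_nbit[of _ _ k] class_sum bit_contrast_eq[of p k, OF assms]
    by (simp add: scaleR_diff_right)
qed

lemma two_point_variance:
  fixes c0 c1 :: "'a::real_inner"
  assumes "q0 + q1 = 1"
  shows "q0 * (norm (c0 - (q0 *\<^sub>R c0 + q1 *\<^sub>R c1)))\<^sup>2 + q1 * (norm (c1 - (q0 *\<^sub>R c0 + q1 *\<^sub>R c1)))\<^sup>2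
    = q0 * q1 * (norm (c0 - c1))\<^sup>2"
proof -
  have q1: "q1 = 1 - q0" using assms by simp
  have d0: "c0 - (q0 *\<^sub>R c0 + q1 *\<^sub>R c1) = q1 *\<^sub>R (c0 - c1)"
    and d1: "c1 - (q0 *\<^sub>R c0 + q1 *\<^sub>R c1) = - q0 *\<^sub>R (c0 - c1)"
    unfolding q1 by (simp_all add: algebra_simps)
  show ?thesis
    unfolding d0 d1 norm_scaleR power_mult_distrib power2_abs
    unfolding q1 by (simp add: power2_eq_square algebra_simps)
qed

lemma cond_mean_spread_eq_bit_contrast_vec:
  assumes "0 < p k" "p k < 1"
  shows "(\<Sum>u\<in>{0, 1}. bitprob p k u * (norm (h * (cond_mean m p x k u - mean_sym m p x)))\<^sup>2)
    = (norm (h * bit_contrast_vec m p x k))\<^sup>2"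
proof -
  have "bitprob p k 0 + bitprob p k 1 = 1" "0 \<le> bitprob p k 0 * bitprob p k 1"
    using assms by (simp_all add: bitprob_def)
  then show ?thesis
    unfolding mean_sym_eq_cond_means[of p k, OF assms] bit_contrast_vec_eq_cond_means[of p k, OF assms]
    by (simp add: two_point_variance power_mult_distrib ring_distribs mult_scaleR_right)
qed

section \<open>Gaussian densities\<close>

definition gauss_dens :: "real \<Rightarrow> real ^ 'n \<Rightarrow> real ^ 'n \<Rightarrow> real" where
  "gauss_dens N0 v y = (\<Prod>n\<in>UNIV. exp (- ((y $ n - v $ n)\<^sup>2) / N0) / sqrt (pi * N0))"

lemma gauss_ch_eq_gauss_dens: "gauss_ch N0 h xv = gauss_dens N0 (h * xv)"
  by (simp add: fun_eq_iff gauss_ch_def gauss_dens_def times_vec_def)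

lemma inner_vec_eq_sum: "(x :: real ^ 'n) \<bullet> y = (\<Sum>n\<in>UNIV. x $ n * y $ n)"
  by (simp add: inner_vec_def)

lemma gauss_dens_eq_exp_norm:
  "gauss_dens N0 v (y :: real ^ 'n) = exp (- (norm (y - v))\<^sup>2 / N0) / sqrt (pi * N0) ^ CARD('n)"
proof -
  have "(\<Prod>n\<in>UNIV. exp (- ((y $ n - v $ n)\<^sup>2) / N0)) = exp (\<Sum>n\<in>UNIV. - ((y $ n - v $ n)\<^sup>2) / N0)"
    by (simp add: exp_sum)
  also have "(\<Sum>n\<in>UNIV. - ((y $ n - v $ n)\<^sup>2) / N0) = - (norm (y - v))\<^sup>2 / N0"
    unfolding power2_norm_eq_inner inner_vec_eq_sum
    by (simp add: sum_negf power2_eq_square flip: sum_divide_distrib)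
  finally show ?thesis
    by (simp add: gauss_dens_def prod_dividef)
qed

lemma gauss_dens_pos: "N0 > 0 \<Longrightarrow> 0 < gauss_dens N0 v y"
  unfolding gauss_dens_def by (intro prod_pos) auto

lemma gauss_dens_measurable[measurable]: "(\<lambda>y. gauss_dens N0 v y) \<in> borel_measurable borel"
  unfolding gauss_dens_def by measurable

lemma gauss_dens_eq_normal_density:
  "N0 > 0 \<Longrightarrow> gauss_dens N0 v y = (\<Prod>n\<in>UNIV. normal_density (v $ n) (sqrt (N0 / 2)) (y $ n))"
  unfolding gauss_dens_def normal_density_def
  by (intro prod.cong refl) (simp add: power2_eq_square real_sqrt_mult)

lemma prod_Basis_vec: "(\<Prod>b\<in>(Basis :: (real ^ 'n) set). f b) = (\<Prod>i\<in>UNIV. f (axis i 1))"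
proof -
  have Basis: "(Basis :: (real ^ 'n) set) = (\<lambda>i. axis i 1) ` UNIV"
    by (auto simp: Basis_vec_def)
  have "inj (\<lambda>i::'n. axis i (1::real))"
    by (auto simp: inj_def axis_eq_axis)
  then show ?thesis
    unfolding Basis by (subst prod.reindex) simp_all
qed

lemma nn_integral_gauss_dens:
  assumes "N0 > 0"
  shows "(\<integral>\<^sup>+y. ennreal (gauss_dens N0 v y) \<partial>lborel) = 1"
proof -
  let ?f = "\<lambda>b x. normal_density (v \<bullet> b) (sqrt (N0 / 2)) x"
  have "(\<integral>\<^sup>+y. ennreal (gauss_dens N0 v y) \<partial>lborel) = (\<integral>\<^sup>+y. (\<Prod>b\<in>Basis. ennreal (?f b (y \<bullet> b))) \<partial>lborel)"
    by (intro nn_integral_cong)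
      (simp add: gauss_dens_eq_normal_density[OF assms] prod_Basis_vec inner_axis prod_ennreal)
  also have "\<dots> = (\<Prod>b\<in>Basis. (\<integral>\<^sup>+x. ennreal (?f b x) \<partial>lborel))"
    by (rule nn_integral_lborel_prod) auto
  also have "\<dots> = 1"
    using assms by (intro prod.neutral ballI) (simp add: nn_integral_eq_integral)
  finally show ?thesis .
qed

lemma integrable_gauss_dens: "N0 > 0 \<Longrightarrow> integrable lborel (gauss_dens N0 v)"
  using gauss_dens_pos nn_integral_gauss_dens[of N0 v]
  by (intro integrableI_nonneg AE_I2) (auto intro: less_imp_le)

lemma integral_gauss_dens: "N0 > 0 \<Longrightarrow> integral\<^sup>L lborel (gauss_dens N0 v) = 1"
  using gauss_dens_pos[of N0 v] nn_integral_gauss_dens[of N0 v]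
  by (subst integral_eq_nn_integral) (auto intro!: AE_I2 less_imp_le)

lemma gauss_dens_shift:
  assumes "N0 > 0"
  shows "gauss_dens N0 (v + b) y = gauss_dens N0 v y * exp ((2 / N0) * ((y - v) \<bullet> b - (norm b)\<^sup>2 / 2))"
proof -
  have norm_shift: "(norm (y - (v + b)))\<^sup>2 = (norm (y - v))\<^sup>2 - 2 * ((y - v) \<bullet> b) + (norm b)\<^sup>2"
    by (simp add: power2_norm_eq_inner inner_diff_left inner_diff_right inner_add_left inner_add_right
        inner_commute)
  have arg: "- (norm (y - (v + b)))\<^sup>2 / N0
      = - (norm (y - v))\<^sup>2 / N0 + (2 / N0) * ((y - v) \<bullet> b - (norm b)\<^sup>2 / 2)"
    unfolding norm_shift using assms by (simp add: field_simps)
  show ?thesis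
    unfolding gauss_dens_eq_exp_norm arg exp_add by simp
qed

lemma ln_gauss_dens_ratio:
  assumes "N0 > 0"
  shows "ln (gauss_dens N0 v y / gauss_dens N0 c y) = (2 / N0) * ((y - c) \<bullet> (v - c) - (norm (v - c))\<^sup>2 / 2)"
  using gauss_dens_shift[OF assms, of c "v - c" y] gauss_dens_pos[OF assms, of c y] by simp

lemma gauss_dens_exp_tilt:
  assumes "N0 > 0"
  shows "gauss_dens N0 v y * exp ((2 / N0) * ((y - v) \<bullet> b)) = exp ((norm b)\<^sup>2 / N0) * gauss_dens N0 (v + b) y"
proof -
  have "(norm b)\<^sup>2 / N0 + (2 / N0) * ((y - v) \<bullet> b - (norm b)\<^sup>2 / 2) = (2 / N0) * ((y - v) \<bullet> b)"
    using assms by (simp add: field_simps)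
  then show ?thesis
    unfolding gauss_dens_shift[OF assms] by (simp add: mult_ac flip: exp_add)
qed

lemma gauss_dens_mult_div:
  assumes "N0 > 0"
  shows "gauss_dens N0 a y * gauss_dens N0 b y / gauss_dens N0 c y
    = exp ((2 / N0) * ((a - c) \<bullet> (b - c))) * gauss_dens N0 (a + b - c) y"
proof -
  have norm_sum: "(norm (y - (a + b - c)))\<^sup>2
      = (norm (y - a))\<^sup>2 + (norm (y - b))\<^sup>2 - (norm (y - c))\<^sup>2 + 2 * ((a - c) \<bullet> (b - c))"
    by (simp add: power2_norm_eq_inner inner_diff_left inner_diff_right inner_add_left inner_add_right
        inner_commute)
  have "- (norm (y - a))\<^sup>2 / N0 + - (norm (y - b))\<^sup>2 / N0 - - (norm (y - c))\<^sup>2 / N0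
      = (2 / N0) * ((a - c) \<bullet> (b - c)) + - (norm (y - (a + b - c)))\<^sup>2 / N0"
    unfolding norm_sum using assms by (simp add: field_simps)
  then have "exp (- (norm (y - a))\<^sup>2 / N0) * exp (- (norm (y - b))\<^sup>2 / N0) / exp (- (norm (y - c))\<^sup>2 / N0)
      = exp ((2 / N0) * ((a - c) \<bullet> (b - c))) * exp (- (norm (y - (a + b - c)))\<^sup>2 / N0)"
    by (simp only: exp_add[symmetric] exp_diff[symmetric])
  moreover have "sqrt (pi * N0) ^ CARD('n) > 0"
    using assms by simp
  ultimately show ?thesis
    unfolding gauss_dens_eq_exp_norm by (simp add: field_simps)
qed

lemma gauss_dens_reflect: "gauss_dens N0 v (2 *\<^sub>R v - y) = gauss_dens N0 v y"
  unfolding gauss_dens_def by (intro prod.cong refl) (simp add: power2_eq_square algebra_simps)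

lemma integral_lborel_reflect:
  fixes F :: "real ^ 'n \<Rightarrow> real"
  assumes [measurable]: "F \<in> borel_measurable borel"
  shows "(\<integral>y. F (c - y) \<partial>lborel) = integral\<^sup>L lborel F"
proof -
  have "lborel = density (distr lborel borel (\<lambda>x. c + (-1) *\<^sub>R x)) (\<lambda>_. \<bar>-1::real\<bar> ^ DIM(real ^ 'n))"
    by (rule lborel_affine) simp
  then have "distr lborel borel (\<lambda>y. c - y) = (lborel :: (real ^ 'n) measure)"
    by (simp add: density_1)
  then show ?thesis
    using integral_distr[of "\<lambda>y. c - y" lborel borel F] by simp
qed

lemma integrable_gauss_dens_exp_tilt:
  assumes "N0 > 0"
  shows "integrable lborel (\<lambda>y. gauss_dens N0 v y * exp ((2 / N0) * ((y - v) \<bullet> b)))"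
  unfolding gauss_dens_exp_tilt[OF assms] by (intro integrable_mult_right integrable_gauss_dens assms)

lemma abs_le_exp_plus_exp_minus: "\<bar>t\<bar> \<le> exp t + exp (- t)" for t :: real
  using exp_ge_add_one_self[of t] exp_ge_add_one_self[of "- t"] exp_gt_zero[of t] exp_gt_zero[of "- t"]
  by linarith

lemma integrable_gauss_dens_centered_linear:
  assumes "N0 > 0"
  shows "integrable lborel (\<lambda>y. gauss_dens N0 v y * ((y - v) \<bullet> b))"
proof (rule Bochner_Integration.integrable_bound)
  let ?g = "gauss_dens N0 v" and ?b = "(N0 / 2) *\<^sub>R b"
  have tilt: "(2 / N0) * ((y - v) \<bullet> (c *\<^sub>R ?b)) = c * ((y - v) \<bullet> b)" for y c
    using assms by simp
  let ?G = "\<lambda>y. ?g y * exp ((2 / N0) * ((y - v) \<bullet> ?b)) + ?g y * exp ((2 / N0) * ((y - v) \<bullet> ((- 1) *\<^sub>R ?b)))"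
  show "integrable lborel ?G"
    using assms by (intro Bochner_Integration.integrable_add integrable_gauss_dens_exp_tilt)
  show "AE y in lborel. norm (?g y * ((y - v) \<bullet> b)) \<le> norm (?G y)"
  proof (intro AE_I2)
    fix y
    have "norm (?g y * ((y - v) \<bullet> b)) \<le> ?g y * (exp ((y - v) \<bullet> b) + exp (- ((y - v) \<bullet> b)))"
      using gauss_dens_pos[OF assms, of v y] abs_le_exp_plus_exp_minus
      by (simp add: abs_mult mult_left_mono)
    also have "\<dots> = ?G y"
      using tilt[of y 1] tilt[of y "- 1"] by (simp add: distrib_left)
    finally show "norm (?g y * ((y - v) \<bullet> b)) \<le> norm (?G y)" by simp
  qed
qed measurable

lemma integral_gauss_dens_centered_linear:
  assumes "N0 > 0"
  shows "(\<integral>y. gauss_dens N0 v y * ((y - v) \<bullet> b) \<partial>lborel) = 0"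
proof -
  let ?F = "\<lambda>y. gauss_dens N0 v y * ((y - v) \<bullet> b)"
  have "?F (2 *\<^sub>R v - y) = - ?F y" for y
  proof -
    have "2 *\<^sub>R v - y - v = - (y - v)" by (simp add: algebra_simps scaleR_2)
    then show ?thesis by (simp only: gauss_dens_reflect inner_minus_left mult_minus_right)
  qed
  moreover have "(\<integral>y. ?F (2 *\<^sub>R v - y) \<partial>lborel) = integral\<^sup>L lborel ?F"
    by (rule integral_lborel_reflect) measurable
  ultimately show ?thesis by simp
qed

lemma gauss_dens_affine_eq:
  "gauss_dens N0 v y * (t * ((y - w) \<bullet> b - K))
    = t * (gauss_dens N0 v y * ((y - v) \<bullet> b)) + (t * ((v - w) \<bullet> b - K)) * gauss_dens N0 v y"
  by (simp add: inner_diff_left algebra_simps)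

lemma integrable_gauss_dens_affine:
  "N0 > 0 \<Longrightarrow> integrable lborel (\<lambda>y. gauss_dens N0 v y * (t * ((y - w) \<bullet> b - K)))"
  unfolding gauss_dens_affine_eq
  by (intro Bochner_Integration.integrable_add integrable_mult_right integrable_gauss_dens
      integrable_gauss_dens_centered_linear)

lemma integral_gauss_dens_affine:
  "N0 > 0 \<Longrightarrow> (\<integral>y. gauss_dens N0 v y * (t * ((y - w) \<bullet> b - K)) \<partial>lborel) = t * ((v - w) \<bullet> b - K)"
  unfolding gauss_dens_affine_eq
  by (simp add: integrable_gauss_dens integrable_gauss_dens_centered_linear integral_gauss_dens
      integral_gauss_dens_centered_linear)

lemma integrable_gauss_dens_kl:
  "N0 > 0 \<Longrightarrow> integrable lborel (\<lambda>y. gauss_dens N0 v y * ln (gauss_dens N0 v y / gauss_dens N0 c y))"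
  unfolding ln_gauss_dens_ratio by (rule integrable_gauss_dens_affine)

lemma integral_gauss_dens_kl:
  "N0 > 0 \<Longrightarrow> (\<integral>y. gauss_dens N0 v y * ln (gauss_dens N0 v y / gauss_dens N0 c y) \<partial>lborel)
    = (norm (v - c))\<^sup>2 / N0"
  unfolding ln_gauss_dens_ratio integral_gauss_dens_affine power2_norm_eq_inner by simp

section \<open>Gaussian mixtures\<close>

definition gmix_dens :: "real \<Rightarrow> 'i set \<Rightarrow> ('i \<Rightarrow> real) \<Rightarrow> ('i \<Rightarrow> real ^ 'n) \<Rightarrow> real ^ 'n \<Rightarrow> real" where
  "gmix_dens N0 I q v y = (\<Sum>i\<in>I. q i * gauss_dens N0 (v i) y)"

definition wmean :: "'i set \<Rightarrow> ('i \<Rightarrow> real) \<Rightarrow> ('i \<Rightarrow> real ^ 'n) \<Rightarrow> real ^ 'n" where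
  "wmean I q v = (\<Sum>i\<in>I. q i *\<^sub>R v i)"

lemma sum_weighted_affine:
  assumes "sum q I = 1"
  shows "(\<Sum>i\<in>I. q i * (t * (X i - K))) = t * ((\<Sum>i\<in>I. q i * X i) - (K :: real))"
proof -
  have "(\<Sum>i\<in>I. q i * (t * (X i - K))) = t * (\<Sum>i\<in>I. q i * X i) - t * K * (\<Sum>i\<in>I. q i)"
    by (simp add: algebra_simps sum_subtractf sum_distrib_left sum_distrib_right)
  then show ?thesis using assms by (simp add: algebra_simps)
qed

lemma sum_weighted_inner:
  "sum q I = 1 \<Longrightarrow> (\<Sum>i\<in>I. q i * ((v i - w) \<bullet> d)) = (wmean I q v - w) \<bullet> (d :: real ^ 'n)"
  unfolding wmean_def
  by (simp add: inner_diff_left inner_sum_left right_diff_distrib sum_subtractf flip: sum_distrib_right)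

lemma diff_le_mult_ln_div:
  fixes a b :: real
  assumes "0 < a" "0 < b"
  shows "a - b \<le> a * ln (a / b)"
proof -
  have "- ln (a / b) = ln (b / a)"
    using assms by (simp add: ln_div)
  also have "\<dots> \<le> b / a - 1"
    using assms by (intro ln_le_minus_one) simp
  finally show ?thesis
    using assms by (simp add: field_simps)
qed

locale gauss_mixture =
  fixes N0 :: real and I :: "'i set" and q :: "'i \<Rightarrow> real" and v :: "'i \<Rightarrow> real ^ 'n::finite"
  assumes N0: "N0 > 0" and fin: "finite I" and qpos: "\<And>i. i \<in> I \<Longrightarrow> q i > 0" and qsum: "sum q I = 1"
begin

abbreviation "dens \<equiv> gmix_dens N0 I q v"

lemma dens_pos: "0 < dens y"
proof -
  have "I \<noteq> {}" using qsum by auto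
  then show ?thesis
    unfolding gmix_dens_def using fin qpos gauss_dens_pos[OF N0] by (intro sum_pos) (auto intro!: mult_pos_pos)
qed

lemma dens_measurable[measurable]: "dens \<in> borel_measurable borel"
  unfolding gmix_dens_def by measurable

lemma integrable_dens: "integrable lborel dens"
  unfolding gmix_dens_def
  by (intro Bochner_Integration.integrable_sum integrable_mult_right integrable_gauss_dens N0)

lemma integral_dens: "integral\<^sup>L lborel dens = 1"
  unfolding gmix_dens_def
  by (subst Bochner_Integration.integral_sum) (auto simp: qsum integral_gauss_dens[OF N0] integrable_gauss_dens[OF N0])

text \<open>The integral of the squared mixture density divided by the Gaussian density centred at \<open>c\<close>,
  i.e. one plus the \<open>\<chi>\<^sup>2\<close>-divergence of the mixture from that Gaussian.\<close>
definition "chi_moment c = (\<Sum>i\<in>I. \<Sum>j\<in>I. q i * q j * exp ((2 / N0) * ((v i - c) \<bullet> (v j - c))))"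

lemma dens_sq_div_gauss:
  "dens y * dens y / gauss_dens N0 c y
    = (\<Sum>i\<in>I. \<Sum>j\<in>I. q i * q j * (exp ((2 / N0) * ((v i - c) \<bullet> (v j - c))) * gauss_dens N0 (v i + v j - c) y))"
proof -
  have "dens y * dens y / gauss_dens N0 c y
      = (\<Sum>i\<in>I. \<Sum>j\<in>I. q i * q j * (gauss_dens N0 (v i) y * gauss_dens N0 (v j) y / gauss_dens N0 c y))"
    unfolding gmix_dens_def sum_product sum_divide_distrib by (intro sum.cong refl) (simp add: mult_ac)
  then show ?thesis by (simp add: gauss_dens_mult_div[OF N0])
qed

lemma integrable_dens_sq_div_gauss: "integrable lborel (\<lambda>y. dens y * dens y / gauss_dens N0 c y)"
  unfolding dens_sq_div_gauss
  by (intro Bochner_Integration.integrable_sum integrable_mult_right integrable_gauss_dens N0)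

lemma integral_dens_sq_div_gauss: "(\<integral>y. dens y * dens y / gauss_dens N0 c y \<partial>lborel) = chi_moment c"
  unfolding dens_sq_div_gauss chi_moment_def
  by (simp add: Bochner_Integration.integral_sum Bochner_Integration.integrable_sum integrable_mult_right
      integrable_gauss_dens[OF N0] integral_gauss_dens[OF N0])

definition "kl_integrand c y = dens y * ln (dens y / gauss_dens N0 c y)"

definition "kl_div c = integral\<^sup>L lborel (kl_integrand c)"

lemma kl_integrand_measurable[measurable]: "kl_integrand c \<in> borel_measurable borel"
  unfolding kl_integrand_def by measurable

lemma kl_integrand_lower: "dens y - gauss_dens N0 c y \<le> kl_integrand c y"
  unfolding kl_integrand_def by (intro diff_le_mult_ln_div dens_pos gauss_dens_pos N0)

lemma kl_integrand_upper: "kl_integrand c y \<le> dens y * dens y / gauss_dens N0 c y - dens y"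
proof -
  have "ln (dens y / gauss_dens N0 c y) \<le> dens y / gauss_dens N0 c y - 1"
    using gauss_dens_pos[OF N0, of c y] dens_pos[of y] by (intro ln_le_minus_one) simp
  then have "dens y * ln (dens y / gauss_dens N0 c y) \<le> dens y * (dens y / gauss_dens N0 c y - 1)"
    using dens_pos[of y] by (intro mult_left_mono) auto
  then show ?thesis by (simp add: kl_integrand_def algebra_simps)
qed

lemma integrable_kl_integrand: "integrable lborel (kl_integrand c)"
proof (rule Bochner_Integration.integrable_bound)
  let ?G = "\<lambda>y. dens y * dens y / gauss_dens N0 c y + dens y + gauss_dens N0 c y"
  show "integrable lborel ?G"
    by (intro Bochner_Integration.integrable_add integrable_dens_sq_div_gauss integrable_dens
        integrable_gauss_dens N0)
  show "AE y in lborel. norm (kl_integrand c y) \<le> norm (?G y)"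
  proof (intro AE_I2)
    fix y
    have "0 \<le> dens y * dens y / gauss_dens N0 c y"
      using dens_pos[of y] gauss_dens_pos[OF N0, of c y] by simp
    then have "\<bar>kl_integrand c y\<bar> \<le> ?G y" "0 \<le> ?G y"
      using kl_integrand_lower[of y c] kl_integrand_upper[of c y] dens_pos[of y] gauss_dens_pos[OF N0, of c y]
      unfolding abs_le_iff by linarith+
    then show "norm (kl_integrand c y) \<le> norm (?G y)"
      by simp
  qed
qed measurable

lemma kl_div_nonneg: "0 \<le> kl_div c"
proof -
  have "integral\<^sup>L lborel (\<lambda>y. dens y - gauss_dens N0 c y) \<le> kl_div c"
    unfolding kl_div_def
    by (intro integral_mono kl_integrand_lower integrable_kl_integrand Bochner_Integration.integrable_diff
        integrable_dens integrable_gauss_dens N0)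
  moreover have "integral\<^sup>L lborel (\<lambda>y. dens y - gauss_dens N0 c y) = 0"
    using integrable_dens integrable_gauss_dens[OF N0, of c] integral_dens integral_gauss_dens[OF N0, of c]
    by simp
  ultimately show ?thesis by simp
qed

lemma kl_div_le_chi_moment: "kl_div c \<le> chi_moment c - 1"
proof -
  have "kl_div c \<le> integral\<^sup>L lborel (\<lambda>y. dens y * dens y / gauss_dens N0 c y - dens y)"
    unfolding kl_div_def
    by (intro integral_mono kl_integrand_upper integrable_kl_integrand Bochner_Integration.integrable_diff
        integrable_dens integrable_dens_sq_div_gauss)
  then show ?thesis
    using integrable_dens integrable_dens_sq_div_gauss integral_dens_sq_div_gauss integral_dens by simp
qed

text \<open>Pointwise convexity of the relative entropy in its first argument.\<close>
lemma kl_integrand_le_weighted: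
  "kl_integrand c y \<le> (\<Sum>i\<in>I. q i * (gauss_dens N0 (v i) y * ln (gauss_dens N0 (v i) y / gauss_dens N0 c y)))"
proof -
  let ?g = "\<lambda>i. gauss_dens N0 (v i) y"
  have "ln (?g i / gauss_dens N0 c y) = ln (?g i / dens y) + ln (dens y / gauss_dens N0 c y)" for i
    using gauss_dens_pos[OF N0, of "v i" y] gauss_dens_pos[OF N0, of c y] dens_pos[of y] by (simp add: ln_div)
  then have "(\<Sum>i\<in>I. q i * (?g i * ln (?g i / gauss_dens N0 c y)))
      = (\<Sum>i\<in>I. q i * (?g i * ln (?g i / dens y))) + kl_integrand c y"
    by (simp add: kl_integrand_def gmix_dens_def algebra_simps sum.distrib sum_distrib_right)
  moreover have "(\<Sum>i\<in>I. q i * (?g i - dens y)) \<le> (\<Sum>i\<in>I. q i * (?g i * ln (?g i / dens y)))"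
    using qpos dens_pos gauss_dens_pos[OF N0]
    by (intro sum_mono mult_left_mono diff_le_mult_ln_div) (auto intro: less_imp_le)
  moreover have "(\<Sum>i\<in>I. q i * (?g i - dens y)) = 0"
    using qsum by (simp add: right_diff_distrib sum_subtractf gmix_dens_def flip: sum_distrib_right)
  ultimately show ?thesis by simp
qed

lemma kl_div_le_weighted: "kl_div c \<le> (\<Sum>i\<in>I. q i * (norm (v i - c))\<^sup>2 / N0)"
proof -
  have "kl_div c
      \<le> integral\<^sup>L lborel (\<lambda>y. \<Sum>i\<in>I. q i * (gauss_dens N0 (v i) y * ln (gauss_dens N0 (v i) y / gauss_dens N0 c y)))"
    unfolding kl_div_def
    by (intro integral_mono kl_integrand_le_weighted integrable_kl_integrand Bochner_Integration.integrable_sum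
        integrable_mult_right integrable_gauss_dens_kl N0)
  also have "\<dots> = (\<Sum>i\<in>I. q i * (norm (v i - c))\<^sup>2 / N0)"
    by (simp add: Bochner_Integration.integral_sum integrable_mult_right integrable_gauss_dens_kl[OF N0]
        integral_gauss_dens_kl[OF N0])
  finally show ?thesis .
qed

lemma dens_ln_gauss_ratio_eq:
  "dens y * ln (gauss_dens N0 c y / gauss_dens N0 w y)
    = (\<Sum>i\<in>I. q i * (gauss_dens N0 (v i) y * ((2 / N0) * ((y - w) \<bullet> (c - w) - (norm (c - w))\<^sup>2 / 2))))"
  unfolding ln_gauss_dens_ratio[OF N0] gmix_dens_def sum_distrib_right mult.assoc ..

lemma integrable_dens_ln_gauss_ratio:
  "integrable lborel (\<lambda>y. dens y * ln (gauss_dens N0 c y / gauss_dens N0 w y))"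
  unfolding dens_ln_gauss_ratio_eq
  by (intro Bochner_Integration.integrable_sum integrable_mult_right integrable_gauss_dens_affine N0)

lemma integral_dens_ln_gauss_ratio:
  "(\<integral>y. dens y * ln (gauss_dens N0 c y / gauss_dens N0 w y) \<partial>lborel)
    = (2 / N0) * ((wmean I q v - w) \<bullet> (c - w) - (norm (c - w))\<^sup>2 / 2)"
proof -
  have "(\<integral>y. dens y * ln (gauss_dens N0 c y / gauss_dens N0 w y) \<partial>lborel)
      = (\<Sum>i\<in>I. q i * ((2 / N0) * ((v i - w) \<bullet> (c - w) - (norm (c - w))\<^sup>2 / 2)))"
    unfolding dens_ln_gauss_ratio_eq
    by (subst Bochner_Integration.integral_sum)
      (simp_all only: integrable_mult_right integrable_gauss_dens_affine[OF N0] integral_mult_right_zero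
        integral_gauss_dens_affine[OF N0])
  also have "\<dots> = (2 / N0) * ((wmean I q v - w) \<bullet> (c - w) - (norm (c - w))\<^sup>2 / 2)"
    by (simp only: sum_weighted_affine[OF qsum] sum_weighted_inner[OF qsum])
  finally show ?thesis .
qed

end




definition exp_gram :: "'i set \<Rightarrow> ('i \<Rightarrow> real) \<Rightarrow> ('i \<Rightarrow> real ^ 'n::finite) \<Rightarrow> real \<Rightarrow> real" where
  "exp_gram I q a t = (\<Sum>i\<in>I. \<Sum>j\<in>I. q i * q j * exp (t * (a i \<bullet> a j)))"

lemma exp_gram_has_derivative:
  "(exp_gram I q a has_real_derivative (\<Sum>i\<in>I. \<Sum>j\<in>I. q i * q j * (a i \<bullet> a j))) (at 0)"
  unfolding exp_gram_def by (auto intro!: derivative_eq_intros simp: mult_ac)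

lemma filterlim_const_divide_at_top: "c \<noteq> 0 \<Longrightarrow> filterlim (\<lambda>N::real. c / N) (at 0) at_top"
  unfolding filterlim_at
  using eventually_gt_at_top[of 0]
  by (auto elim: eventually_mono
      intro: tendsto_divide_0[OF tendsto_const filterlim_at_top_imp_at_infinity[OF filterlim_ident]])

lemma tendsto_exp_gram:
  assumes "sum q I = 1" and "(\<Sum>i\<in>I. q i *\<^sub>R a i) = 0"
  shows "((\<lambda>N. N * (exp_gram I q a (2 / N) - 1)) \<longlongrightarrow> 0) at_top"
proof -
  have "(\<Sum>j\<in>I. q i * q j * (a i \<bullet> a j)) = q i * (a i \<bullet> (\<Sum>j\<in>I. q j *\<^sub>R a j))" for i
    by (simp add: inner_sum_right sum_distrib_left mult.assoc)
  then have "(exp_gram I q a has_real_derivative 0) (at 0)"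
    using exp_gram_has_derivative[of I q a] assms(2) by simp
  moreover have "exp_gram I q a 0 = 1"
    unfolding exp_gram_def using assms(1) by (simp flip: sum_distrib_left sum_distrib_right)
  ultimately have "((\<lambda>t. (exp_gram I q a t - 1) / t) \<longlongrightarrow> 0) (at 0)"
    unfolding has_field_derivative_iff by simp
  from filterlim_compose[OF this filterlim_const_divide_at_top[of 2]]
  have "((\<lambda>N. (exp_gram I q a (2 / N) - 1) / (2 / N)) \<longlongrightarrow> 0) at_top"
    by (simp add: comp_def)
  then have "((\<lambda>N. 2 * ((exp_gram I q a (2 / N) - 1) / (2 / N))) \<longlongrightarrow> 0) at_top"
    by (rule tendsto_mult_right_zero)
  moreover have "\<forall>\<^sub>F N in at_top. 2 * ((exp_gram I q a (2 / N) - 1) / (2 / N)) = N * (exp_gram I q a (2 / N) - 1)"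
    using eventually_gt_at_top[of 0] by eventually_elim simp
  ultimately show ?thesis by (rule Lim_transform_eventually)
qed

lemma (in gauss_mixture) chi_moment_eq_exp_gram: "chi_moment c = exp_gram I q (\<lambda>i. v i - c) (2 / N0)"
  by (simp add: chi_moment_def exp_gram_def)

text \<open>Sandwiched between \<open>0\<close> and \<open>N0\<close> times the \<open>\<chi>\<^sup>2\<close>-divergence, which is \<open>o(1/N0)\<close>
  because the mixture is centred at its mean.\<close>
lemma tendsto_kl_div_at_wmean:
  assumes "finite I" and "\<And>i. i \<in> I \<Longrightarrow> q i > 0" and "sum q I = 1"
  shows "((\<lambda>N0. N0 * gauss_mixture.kl_div N0 I q v (wmean I q v)) \<longlongrightarrow> 0) at_top"
proof (rule tendsto_sandwich)
  let ?a = "\<lambda>i. v i - wmean I q v"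
  have mixture: "gauss_mixture N0 I q" if "N0 > 0" for N0
    using that assms by unfold_locales auto
  show "\<forall>\<^sub>F N0 in at_top. 0 \<le> N0 * gauss_mixture.kl_div N0 I q v (wmean I q v)"
    using eventually_gt_at_top[of 0]
    by eventually_elim (simp add: gauss_mixture.kl_div_nonneg[OF mixture])
  show "\<forall>\<^sub>F N0 in at_top.
      N0 * gauss_mixture.kl_div N0 I q v (wmean I q v) \<le> N0 * (exp_gram I q ?a (2 / N0) - 1)"
    using eventually_gt_at_top[of 0]
  proof eventually_elim
    case (elim N0)
    interpret gauss_mixture N0 I q v by (rule mixture[OF elim])
    show ?case
      using elim kl_div_le_chi_moment[of "wmean I q v"] by (simp add: chi_moment_eq_exp_gram)
  qed
  have "(\<Sum>i\<in>I. q i *\<^sub>R ?a i) = 0"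
    using assms(3) by (simp add: scaleR_diff_right sum_subtractf wmean_def flip: scaleR_sum_left)
  with assms(3) show "((\<lambda>N. N * (exp_gram I q ?a (2 / N) - 1)) \<longlongrightarrow> 0) at_top"
    by (rule tendsto_exp_gram)
qed simp

section \<open>Mutual information of a binary label at low SNR\<close>

text \<open>An index \<open>i\<close> drawn with law \<open>P\<close>, a binary label \<open>lab i\<close>, and the output of the Gaussian channel
  with mean \<open>v i\<close>; \<open>mi_nats N0\<close> is the mutual information of label and output, in nats.\<close>
locale binary_split =
  fixes I :: "'i set" and P :: "'i \<Rightarrow> real" and lab :: "'i \<Rightarrow> nat" and v :: "'i \<Rightarrow> real ^ 'n::finite"
  assumes fin: "finite I" and Ppos: "\<And>i. i \<in> I \<Longrightarrow> P i > 0" and Psum: "sum P I = 1"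
    and lab_01: "\<And>i. i \<in> I \<Longrightarrow> lab i = 0 \<or> lab i = 1"
    and lab_prob_pos_or: "\<And>u. sum P {i\<in>I. lab i = u} > 0 \<or> u \<notin> {0, 1}"
begin

definition "lab_set u = {i\<in>I. lab i = u}"
definition "lab_prob u = sum P (lab_set u)"
definition "lab_weight u i = P i / lab_prob u"

abbreviation "lab_dens N0 u \<equiv> gmix_dens N0 (lab_set u) (lab_weight u) v"
abbreviation "lab_mean u \<equiv> wmean (lab_set u) (lab_weight u) v"
abbreviation "lab_kl N0 u \<equiv> gauss_mixture.kl_div N0 (lab_set u) (lab_weight u) v"
abbreviation "full_dens N0 \<equiv> gmix_dens N0 I P v"

definition "mi_nats N0 =
  (\<Sum>u\<in>{0, 1}. lab_prob u * (\<integral>y. lab_dens N0 u y * ln (lab_dens N0 u y / full_dens N0 y) \<partial>lborel))"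

lemma lab_prob_pos: "u \<in> {0, 1} \<Longrightarrow> lab_prob u > 0"
  using lab_prob_pos_or[of u] by (auto simp: lab_prob_def lab_set_def)

lemma gauss_mixture_lab_set: "u \<in> {0, 1} \<Longrightarrow> N0 > 0 \<Longrightarrow> gauss_mixture N0 (lab_set u) (lab_weight u)"
  using fin lab_prob_pos[of u] Ppos
  by unfold_locales (auto simp: lab_weight_def lab_prob_def lab_set_def simp flip: sum_divide_distrib)

lemma gauss_mixture_full: "N0 > 0 \<Longrightarrow> gauss_mixture N0 I P"
  by unfold_locales (auto simp: fin Ppos Psum)

lemma sum_lab_sets: "(\<Sum>u\<in>{0, 1}. sum g (lab_set u)) = sum g I"
proof -
  have "I = lab_set 0 \<union> lab_set 1" "lab_set 0 \<inter> lab_set 1 = {}"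
    using lab_01 by (auto simp: lab_set_def)
  then show ?thesis
    using fin by (simp add: lab_set_def sum.union_disjoint[symmetric])
qed

lemma sum_lab_prob: "(\<Sum>u\<in>{0, 1}. lab_prob u) = 1"
  unfolding lab_prob_def sum_lab_sets Psum ..

lemma lab_prob_mult_lab_dens:
  "u \<in> {0, 1} \<Longrightarrow> lab_prob u * lab_dens N0 u y = (\<Sum>i\<in>lab_set u. P i * gauss_dens N0 (v i) y)"
  using lab_prob_pos[of u] by (simp add: gmix_dens_def lab_weight_def sum_distrib_left)

lemma sum_lab_prob_mult_lab_dens: "(\<Sum>u\<in>{0, 1}. lab_prob u * lab_dens N0 u y) = full_dens N0 y"
proof -
  have "(\<Sum>u\<in>{0, 1}. lab_prob u * lab_dens N0 u y) = (\<Sum>u\<in>{0, 1}. \<Sum>i\<in>lab_set u. P i * gauss_dens N0 (v i) y)"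
    using lab_prob_mult_lab_dens by (intro sum.cong refl) auto
  also have "\<dots> = full_dens N0 y"
    unfolding sum_lab_sets gmix_dens_def ..
  finally show ?thesis .
qed

lemma lab_prob_mult_lab_dens_le:
  assumes "u \<in> {0, 1}" and "N0 > 0"
  shows "lab_prob u * lab_dens N0 u y \<le> full_dens N0 y"
  unfolding lab_prob_mult_lab_dens[OF assms(1)] unfolding gmix_dens_def
  using Ppos gauss_dens_pos[OF assms(2)]
  by (intro sum_mono2 fin) (auto simp: lab_set_def intro!: less_imp_le mult_pos_pos)

lemma integrable_mi_integrand:
  assumes "u \<in> {0, 1}" and "N0 > 0"
  shows "integrable lborel (\<lambda>y. lab_dens N0 u y * ln (lab_dens N0 u y / full_dens N0 y))"
proof (rule Bochner_Integration.integrable_bound)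
  interpret U: gauss_mixture N0 "lab_set u" "lab_weight u" v by (rule gauss_mixture_lab_set[OF assms])
  interpret F: gauss_mixture N0 I P v by (rule gauss_mixture_full[OF assms(2)])
  let ?G = "\<lambda>y. full_dens N0 y + lab_dens N0 u y + lab_dens N0 u y / lab_prob u"
  show "integrable lborel ?G"
    by (intro Bochner_Integration.integrable_add U.integrable_dens F.integrable_dens integrable_divide)
  show "AE y in lborel. norm (lab_dens N0 u y * ln (lab_dens N0 u y / full_dens N0 y)) \<le> norm (?G y)"
  proof (intro AE_I2)
    fix y
    have pos: "0 < lab_dens N0 u y" "0 < full_dens N0 y" "0 < lab_prob u"
      using U.dens_pos F.dens_pos lab_prob_pos[OF assms(1)] by auto
    have "ln (lab_dens N0 u y / full_dens N0 y) \<le> lab_dens N0 u y / full_dens N0 y - 1"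
      using pos by (intro ln_le_minus_one) simp
    also have "\<dots> \<le> 1 / lab_prob u"
    proof -
      have "lab_dens N0 u y / full_dens N0 y \<le> 1 / lab_prob u"
        using lab_prob_mult_lab_dens_le[OF assms, of y] pos by (simp add: field_simps)
      then show ?thesis by linarith
    qed
    finally have "lab_dens N0 u y * ln (lab_dens N0 u y / full_dens N0 y) \<le> lab_dens N0 u y / lab_prob u"
      using pos(1) by (simp add: mult_left_mono divide_inverse)
    moreover have "lab_dens N0 u y - full_dens N0 y \<le> lab_dens N0 u y * ln (lab_dens N0 u y / full_dens N0 y)"
      using pos by (intro diff_le_mult_ln_div)
    moreover have "0 < lab_dens N0 u y / lab_prob u"
      using pos by simp
    ultimately have "\<bar>lab_dens N0 u y * ln (lab_dens N0 u y / full_dens N0 y)\<bar> \<le> ?G y"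
      using pos unfolding abs_le_iff by linarith
    then show "norm (lab_dens N0 u y * ln (lab_dens N0 u y / full_dens N0 y)) \<le> norm (?G y)"
      unfolding real_norm_def by (rule order_trans[OF _ abs_ge_self])
  qed
qed (unfold gmix_dens_def, measurable)

lemma integral_mi_integrand_split:
  assumes "u \<in> {0, 1}" and "N0 > 0"
  shows "integrable lborel (\<lambda>y. lab_dens N0 u y * ln (full_dens N0 y / gauss_dens N0 w y))"
    and "(\<integral>y. lab_dens N0 u y * ln (lab_dens N0 u y / full_dens N0 y) \<partial>lborel)
      = lab_kl N0 u c + (2 / N0) * ((lab_mean u - w) \<bullet> (c - w) - (norm (c - w))\<^sup>2 / 2)
        - (\<integral>y. lab_dens N0 u y * ln (full_dens N0 y / gauss_dens N0 w y) \<partial>lborel)"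
proof -
  interpret U: gauss_mixture N0 "lab_set u" "lab_weight u" v by (rule gauss_mixture_lab_set[OF assms])
  interpret F: gauss_mixture N0 I P v by (rule gauss_mixture_full[OF assms(2)])
  have split: "lab_dens N0 u y * ln (full_dens N0 y / gauss_dens N0 w y)
      = U.kl_integrand c y + lab_dens N0 u y * ln (gauss_dens N0 c y / gauss_dens N0 w y)
        - lab_dens N0 u y * ln (lab_dens N0 u y / full_dens N0 y)" for y
    using U.dens_pos[of y] F.dens_pos[of y] gauss_dens_pos[OF assms(2), of c y] gauss_dens_pos[OF assms(2), of w y]
    by (simp add: U.kl_integrand_def ln_div algebra_simps)
  note integrable = U.integrable_kl_integrand U.integrable_dens_ln_gauss_ratio integrable_mi_integrand[OF assms]
  show "integrable lborel (\<lambda>y. lab_dens N0 u y * ln (full_dens N0 y / gauss_dens N0 w y))"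
    unfolding split by (intro Bochner_Integration.integrable_diff Bochner_Integration.integrable_add integrable)
  show "(\<integral>y. lab_dens N0 u y * ln (lab_dens N0 u y / full_dens N0 y) \<partial>lborel)
      = lab_kl N0 u c + (2 / N0) * ((lab_mean u - w) \<bullet> (c - w) - (norm (c - w))\<^sup>2 / 2)
        - (\<integral>y. lab_dens N0 u y * ln (full_dens N0 y / gauss_dens N0 w y) \<partial>lborel)"
    unfolding split using U.integral_dens_ln_gauss_ratio[of c w]
    by (simp add: integrable U.kl_div_def Bochner_Integration.integrable_add)
qed

lemma mi_nats_decomp:
  assumes "N0 > 0"
  shows "mi_nats N0 = (\<Sum>u\<in>{0, 1}. lab_prob u * (lab_kl N0 u (c u)
      + (2 / N0) * ((lab_mean u - w) \<bullet> (c u - w) - (norm (c u - w))\<^sup>2 / 2)))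
    - gauss_mixture.kl_div N0 I P v w"
proof -
  interpret F: gauss_mixture N0 I P v by (rule gauss_mixture_full[OF assms])
  let ?T = "\<lambda>u y. lab_dens N0 u y * ln (full_dens N0 y / gauss_dens N0 w y)"
  have "(\<Sum>u\<in>{0, 1}. lab_prob u * integral\<^sup>L lborel (?T u))
      = (\<integral>y. (\<Sum>u\<in>{0, 1}. lab_prob u * ?T u y) \<partial>lborel)"
    using integral_mi_integrand_split(1)[OF _ assms] by (simp add: integrable_mult_right)
  also have "(\<lambda>y. \<Sum>u\<in>{0, 1}. lab_prob u * ?T u y) = F.kl_integrand w"
  proof
    fix y
    have "(\<Sum>u\<in>{0, 1}. lab_prob u * ?T u y)
        = (\<Sum>u\<in>{0, 1}. lab_prob u * lab_dens N0 u y) * ln (full_dens N0 y / gauss_dens N0 w y)"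
      by (simp only: sum_distrib_right mult.assoc)
    then show "(\<Sum>u\<in>{0, 1}. lab_prob u * ?T u y) = F.kl_integrand w y"
      by (simp only: sum_lab_prob_mult_lab_dens F.kl_integrand_def)
  qed
  finally have "(\<Sum>u\<in>{0, 1}. lab_prob u * integral\<^sup>L lborel (?T u)) = F.kl_div w"
    unfolding F.kl_div_def .
  moreover have "lab_prob u * (\<integral>y. lab_dens N0 u y * ln (lab_dens N0 u y / full_dens N0 y) \<partial>lborel)
      = lab_prob u * (lab_kl N0 u (c u) + (2 / N0) * ((lab_mean u - w) \<bullet> (c u - w) - (norm (c u - w))\<^sup>2 / 2))
        - lab_prob u * integral\<^sup>L lborel (?T u)" if "u \<in> {0, 1}" for u
    unfolding integral_mi_integrand_split(2)[OF that assms, of "c u" w] by (simp only: right_diff_distrib)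
  then have "mi_nats N0 = (\<Sum>u\<in>{0, 1}. lab_prob u * (lab_kl N0 u (c u)
      + (2 / N0) * ((lab_mean u - w) \<bullet> (c u - w) - (norm (c u - w))\<^sup>2 / 2)))
    - (\<Sum>u\<in>{0, 1}. lab_prob u * integral\<^sup>L lborel (?T u))"
    unfolding mi_nats_def sum_subtractf[symmetric] by (rule sum.cong[OF refl])
  ultimately show ?thesis by simp
qed

lemma mi_nats_nonneg:
  assumes "N0 > 0"
  shows "0 \<le> mi_nats N0"
proof -
  have "mi_nats N0
      = (\<integral>y. (\<Sum>u\<in>{0, 1}. lab_prob u * (lab_dens N0 u y * ln (lab_dens N0 u y / full_dens N0 y))) \<partial>lborel)"
    unfolding mi_nats_def using integrable_mi_integrand[OF _ assms] by (simp add: integrable_mult_right)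
  also have "\<dots> \<ge> 0"
  proof (rule integral_nonneg_AE, intro AE_I2)
    fix y
    have "(\<Sum>u\<in>{0, 1}. lab_prob u * (lab_dens N0 u y - full_dens N0 y))
        \<le> (\<Sum>u\<in>{0, 1}. lab_prob u * (lab_dens N0 u y * ln (lab_dens N0 u y / full_dens N0 y)))"
      using lab_prob_pos gauss_mixture.dens_pos[OF gauss_mixture_lab_set[OF _ assms]]
        gauss_mixture.dens_pos[OF gauss_mixture_full[OF assms]]
      by (intro sum_mono mult_left_mono diff_le_mult_ln_div) (auto intro: less_imp_le)
    moreover have "(\<Sum>u\<in>{0, 1}. lab_prob u * (lab_dens N0 u y - full_dens N0 y)) = 0"
      using sum_lab_prob_mult_lab_dens[of N0 y] sum_lab_prob
      by (simp only: right_diff_distrib sum_subtractf flip: sum_distrib_right)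
    ultimately show "0 \<le> (\<Sum>u\<in>{0, 1}. lab_prob u * (lab_dens N0 u y * ln (lab_dens N0 u y / full_dens N0 y)))"
      by simp
  qed
  finally show ?thesis .
qed

lemma mi_nats_upper:
  assumes "N0 > 0"
  shows "N0 * mi_nats N0 \<le> (\<Sum>i\<in>I. P i * (norm (v i))\<^sup>2)"
proof -
  have "mi_nats N0 \<le> (\<Sum>u\<in>{0, 1}. lab_prob u * lab_kl N0 u 0)"
    using mi_nats_decomp[OF assms, of "\<lambda>_. 0" 0] gauss_mixture.kl_div_nonneg[OF gauss_mixture_full[OF assms]]
    by simp
  also have "\<dots> \<le> (\<Sum>u\<in>{0, 1}. lab_prob u * (\<Sum>i\<in>lab_set u. lab_weight u i * (norm (v i))\<^sup>2 / N0))"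
    using gauss_mixture.kl_div_le_weighted[OF gauss_mixture_lab_set[OF _ assms], of _ v 0] lab_prob_pos
    by (intro sum_mono mult_left_mono) (auto intro: less_imp_le)
  also have "\<dots> = (\<Sum>u\<in>{0, 1}. \<Sum>i\<in>lab_set u. P i * (norm (v i))\<^sup>2 / N0)"
  proof (intro sum.cong refl)
    fix u :: nat
    assume "u \<in> {0, 1}"
    then show "lab_prob u * (\<Sum>i\<in>lab_set u. lab_weight u i * (norm (v i))\<^sup>2 / N0)
        = (\<Sum>i\<in>lab_set u. P i * (norm (v i))\<^sup>2 / N0)"
      using lab_prob_pos[of u] by (simp add: lab_weight_def sum_distrib_left)
  qed
  also have "\<dots> = (\<Sum>i\<in>I. P i * (norm (v i))\<^sup>2) / N0"
    by (simp only: sum_lab_sets sum_divide_distrib)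
  finally show ?thesis
    using assms by (simp add: field_simps)
qed

lemma tendsto_mi_nats:
  "((\<lambda>N0. N0 * mi_nats N0) \<longlongrightarrow> (\<Sum>u\<in>{0, 1}. lab_prob u * (norm (lab_mean u - wmean I P v))\<^sup>2)) at_top"
proof -
  let ?d = "\<lambda>u. (norm (lab_mean u - wmean I P v))\<^sup>2"
  let ?K = "\<lambda>u N0. N0 * lab_kl N0 u (lab_mean u)"
  let ?KI = "\<lambda>N0. N0 * gauss_mixture.kl_div N0 I P v (wmean I P v)"
  have "(?K u \<longlongrightarrow> 0) at_top" if "u \<in> {0, 1}" for u
    using gauss_mixture_lab_set[OF that, of 1]
    by (intro tendsto_kl_div_at_wmean) (auto simp: gauss_mixture_def)
  moreover have "(?KI \<longlongrightarrow> 0) at_top"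
    by (intro tendsto_kl_div_at_wmean fin Ppos Psum)
  ultimately have "((\<lambda>N0. (\<Sum>u\<in>{0, 1}. lab_prob u * (?K u N0 + ?d u)) - ?KI N0)
      \<longlongrightarrow> (\<Sum>u\<in>{0, 1}. lab_prob u * (0 + ?d u)) - 0) at_top"
    by (intro tendsto_intros) auto
  moreover have "\<forall>\<^sub>F N0 in at_top. (\<Sum>u\<in>{0, 1}. lab_prob u * (?K u N0 + ?d u)) - ?KI N0 = N0 * mi_nats N0"
    using eventually_gt_at_top[of 0]
  proof eventually_elim
    case (elim N0)
    show ?case
      unfolding mi_nats_decomp[OF elim, of lab_mean "wmean I P v"] right_diff_distrib sum_distrib_left
      using elim by (intro arg_cong2[where f = minus] sum.cong refl) (simp_all add: power2_norm_eq_inner field_simps)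
  qed
  ultimately show ?thesis by (simp add: Lim_transform_eventually)
qed

end

section \<open>The slope of the BICM-GMI\<close>

lemma vec_nth_measurable[measurable]: "(\<lambda>x::real ^ 'n. x $ n) \<in> borel_measurable borel"
  by (intro borel_measurable_continuous_onI continuous_intros)

lemma cond_mi_integral_measurable:
  "(\<lambda>h. \<integral>y. cond_dens m p x N0 k u h y * log 2 (cond_dens m p x N0 k u h y / out_dens m p x N0 h y) \<partial>lborel)
    \<in> borel_measurable (borel :: (real ^ 'n) measure)"
proof -
  have "(\<lambda>(h, y). cond_dens m p x N0 k u h y * log 2 (cond_dens m p x N0 k u h y / out_dens m p x N0 h y))
      \<in> borel_measurable (borel \<Otimes>\<^sub>M (lborel :: (real ^ 'n) measure))"
    unfolding cond_dens_def out_dens_def gauss_ch_def case_prod_beta' by measurable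
  then show ?thesis by (rule lborel.borel_measurable_lebesgue_integral)
qed




definition bit_mi_given :: "nat \<Rightarrow> (nat \<Rightarrow> real) \<Rightarrow> (nat \<Rightarrow> real ^ 'n::finite) \<Rightarrow> nat
    \<Rightarrow> real ^ 'n \<Rightarrow> real \<Rightarrow> real" where
  "bit_mi_given m p x k h N0 = (\<Sum>u\<in>{0, 1::nat}. bitprob p k u *
     (\<integral>y. cond_dens m p x N0 k u h y * log 2 (cond_dens m p x N0 k u h y / out_dens m p x N0 h y) \<partial>lborel))"

lemma bit_mi_given_measurable:
  "(\<lambda>h. bit_mi_given m p x k h N0) \<in> borel_measurable (borel :: (real ^ 'n::finite) measure)"
  unfolding bit_mi_given_def
  by (intro borel_measurable_sum borel_measurable_times borel_measurable_const cond_mi_integral_measurable)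

lemma wmean_scaled: "wmean {..<2 ^ m} (symprob m p) (\<lambda>i. h * x i) = h * mean_sym m p x"
  unfolding wmean_def mean_sym_def by (simp add: vec_eq_iff sum_distrib_left mult_ac)

locale interior_bit_probs =
  fixes m :: nat and p :: "nat \<Rightarrow> real"
  assumes interior: "\<forall>k<m. 0 < p k \<and> p k < 1"
begin

lemma bitprob_pos: "k < m \<Longrightarrow> u = 0 \<or> u = 1 \<Longrightarrow> 0 < bitprob p k u"
  using interior by (auto simp: bitprob_def)

lemma symprob_pos: "0 < symprob m p i"
  unfolding symprob_def using bitprob_pos nbit_0_or_1 by (intro prod_pos) auto

lemma binary_split_nbit:
  assumes "k < m"
  shows "binary_split {..<2 ^ m} (symprob m p) (\<lambda>i. nbit i k)"
proof
  show "sum (symprob m p) {i \<in> {..<2 ^ m}. nbit i k = u} > 0 \<or> u \<notin> {0, 1}" for u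
    using sum_symprob_nbit[OF assms, of u p] bitprob_pos[OF assms, of u]
    by (cases "u \<in> {0, 1}") (auto simp: Collect_conj_eq lessThan_def)
qed (use nbit_0_or_1 in \<open>auto simp: symprob_pos sum_symprob\<close>)

context
  fixes k :: nat and x :: "nat \<Rightarrow> real ^ 'n::finite" and h :: "real ^ 'n"
  assumes k: "k < m"
begin

interpretation B: binary_split "{..<2 ^ m}" "symprob m p" "\<lambda>i. nbit i k" "\<lambda>i. h * x i"
  by (rule binary_split_nbit[OF k])

lemma lab_set_nbit: "B.lab_set u = {i. i < 2 ^ m \<and> nbit i k = u}"
  by (auto simp: B.lab_set_def)

lemma lab_prob_nbit: "u \<in> {0, 1} \<Longrightarrow> B.lab_prob u = bitprob p k u"
  using sum_symprob_nbit[OF k, of u p] by (auto simp: B.lab_prob_def lab_set_nbit)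

lemma bit_mi_given_eq_mi_nats: "N0 > 0 \<Longrightarrow> bit_mi_given m p x k h N0 = B.mi_nats N0 / ln 2"
proof -
  assume N0: "N0 > 0"
  have "cond_dens m p x N0 k u h = B.lab_dens N0 u" if "u \<in> {0, 1}" for u
    by (simp add: fun_eq_iff cond_dens_def gmix_dens_def lab_set_nbit B.lab_weight_def
        lab_prob_nbit[OF that] gauss_ch_eq_gauss_dens sum_divide_distrib)
  moreover have "out_dens m p x N0 h = B.full_dens N0"
    by (simp add: fun_eq_iff out_dens_def gmix_dens_def gauss_ch_eq_gauss_dens)
  ultimately show ?thesis
    unfolding bit_mi_given_def B.mi_nats_def sum_divide_distrib log_def
    by (intro sum.cong refl) (simp add: lab_prob_nbit)
qed

lemma bit_mi_given_bounds:
  assumes "N0 > 0"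
  shows "0 \<le> N0 * bit_mi_given m p x k h N0"
    and "N0 * bit_mi_given m p x k h N0 \<le> (\<Sum>i<2 ^ m. symprob m p i * (norm (h * x i))\<^sup>2) / ln 2"
  using B.mi_nats_nonneg[OF assms] B.mi_nats_upper[OF assms] assms
  by (simp_all add: bit_mi_given_eq_mi_nats divide_right_mono)

lemma tendsto_bit_mi_given:
  "((\<lambda>N0. N0 * bit_mi_given m p x k h N0) \<longlongrightarrow> (norm (h * bit_contrast_vec m p x k))\<^sup>2 / ln 2) at_top"
proof -
  have wmean: "wmean (B.lab_set u) (B.lab_weight u) (\<lambda>i. h * x i) = h * cond_mean m p x k u"
    if "u \<in> {0, 1}" for u
    unfolding wmean_def cond_mean_def lab_set_nbit B.lab_weight_def lab_prob_nbit[OF that]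
    by (simp add: vec_eq_iff sum_distrib_left mult_ac)
  have "(\<Sum>u\<in>{0, 1}. B.lab_prob u * (norm (wmean (B.lab_set u) (B.lab_weight u) (\<lambda>i. h * x i)
          - wmean {..<2 ^ m} (symprob m p) (\<lambda>i. h * x i)))\<^sup>2)
      = (\<Sum>u\<in>{0, 1}. bitprob p k u * (norm (h * (cond_mean m p x k u - mean_sym m p x)))\<^sup>2)"
    by (intro sum.cong refl) (simp add: wmean lab_prob_nbit wmean_scaled ring_distribs)
  also have "\<dots> = (norm (h * bit_contrast_vec m p x k))\<^sup>2"
    using interior k by (intro cond_mean_spread_eq_bit_contrast_vec) auto
  finally have limit:
    "(\<Sum>u\<in>{0, 1}. B.lab_prob u * (norm (B.lab_mean u - wmean {..<2 ^ m} (symprob m p) (\<lambda>i. h * x i)))\<^sup>2)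
      = (norm (h * bit_contrast_vec m p x k))\<^sup>2" .
  have "((\<lambda>N0. N0 * B.mi_nats N0 / ln 2) \<longlongrightarrow> (norm (h * bit_contrast_vec m p x k))\<^sup>2 / ln 2) at_top"
    using B.tendsto_mi_nats unfolding limit by (intro tendsto_divide tendsto_const) simp_all
  moreover have "\<forall>\<^sub>F N0 in at_top. N0 * B.mi_nats N0 / ln 2 = N0 * bit_mi_given m p x k h N0"
    using eventually_gt_at_top[of 0] by eventually_elim (simp add: bit_mi_given_eq_mi_nats)
  ultimately show ?thesis by (rule Lim_transform_eventually)
qed

end

end


locale fading =
  fixes HD :: "(real ^ 'n::finite) measure" and pH :: "real \<Rightarrow> real"
  assumes sets_HD: "sets HD = sets borel"
    and pH_measurable: "pH \<in> borel_measurable borel" and pH_nonneg: "\<forall>t. 0 \<le> pH t"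
    and marginal: "\<forall>n. distr HD lborel (\<lambda>h. h $ n) = density lborel (\<lambda>t. ennreal (pH t))"
    and integrable_sec_moment: "integrable lborel (\<lambda>t. t\<^sup>2 * pH t)"
begin

lemma measurable_HD: "f \<in> borel_measurable borel \<Longrightarrow> f \<in> borel_measurable HD"
  using measurable_cong_sets[OF sets_HD refl] by blast

lemma vec_nth_measurable_HD: "(\<lambda>h. h $ n) \<in> measurable HD lborel"
  unfolding measurable_lborel1 by (rule measurable_HD) simp

lemma integrable_sq_nth: "integrable HD (\<lambda>h. (h $ n)\<^sup>2)"
proof -
  have "integrable (density lborel (\<lambda>t. ennreal (pH t))) (\<lambda>t::real. t\<^sup>2)"
    using integrable_sec_moment pH_nonneg pH_measurable
    by (subst integrable_density) (auto simp: mult.commute)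
  then have "integrable (distr HD lborel (\<lambda>h. h $ n)) (\<lambda>t::real. t\<^sup>2)"
    using marginal by simp
  then show ?thesis by (subst (asm) integrable_distr_eq[OF vec_nth_measurable_HD]) auto
qed

lemma integral_sq_nth: "(\<integral>h. (h $ n)\<^sup>2 \<partial>HD) = sec_moment pH"
proof -
  have "(\<integral>h. (h $ n)\<^sup>2 \<partial>HD) = (\<integral>t. t\<^sup>2 \<partial>distr HD lborel (\<lambda>h. h $ n))"
    by (rule integral_distr[OF vec_nth_measurable_HD, symmetric]) simp
  also have "\<dots> = (\<integral>t. t\<^sup>2 \<partial>density lborel (\<lambda>t. ennreal (pH t)))"
    using marginal by simp
  also have "\<dots> = (\<integral>t. pH t * t\<^sup>2 \<partial>lborel)"
    using pH_nonneg pH_measurable by (subst integral_density) auto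
  finally show ?thesis by (simp add: sec_moment_def mult.commute)
qed

lemma norm_mult_sq_eq_sum: "(norm (h * z))\<^sup>2 = (\<Sum>n\<in>UNIV. (z $ n)\<^sup>2 * (h $ n)\<^sup>2)"
  for h z :: "real ^ 'n"
  unfolding power2_norm_eq_inner inner_vec_eq_sum by (simp add: power2_eq_square mult_ac)

lemma integrable_norm_mult_sq: "integrable HD (\<lambda>h. (norm (h * z))\<^sup>2)"
  unfolding norm_mult_sq_eq_sum
  by (intro Bochner_Integration.integrable_sum integrable_mult_right integrable_sq_nth)

lemma integral_norm_mult_sq: "(\<integral>h. (norm (h * z))\<^sup>2 \<partial>HD) = sec_moment pH * (norm z)\<^sup>2"
proof -
  have "(\<integral>h. (norm (h * z))\<^sup>2 \<partial>HD) = (\<Sum>n\<in>UNIV. (z $ n)\<^sup>2 * sec_moment pH)"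
    unfolding norm_mult_sq_eq_sum
    by (simp add: Bochner_Integration.integral_sum integrable_mult_right integrable_sq_nth integral_sq_nth)
  also have "\<dots> = sec_moment pH * (norm z)\<^sup>2"
    unfolding power2_norm_eq_inner inner_vec_eq_sum by (simp add: power2_eq_square sum_distrib_left mult_ac)
  finally show ?thesis .
qed

end


locale bicm_fading = interior_bit_probs m p + fading HD pH
  for m p and HD :: "(real ^ 'n::finite) measure" and pH +
  fixes x :: "nat \<Rightarrow> real ^ 'n"
begin

definition "mi_bound h = (\<Sum>i<2 ^ m. symprob m p i * (norm (h * x i))\<^sup>2) / ln 2"
definition "slope_integrand h = (\<Sum>k<m. (norm (h * bit_contrast_vec m p x k))\<^sup>2 / ln 2)"
definition "gmi_given h N0 = (\<Sum>k<m. bit_mi_given m p x k h N0)"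

lemma integrable_mi_bound: "integrable HD mi_bound"
  unfolding mi_bound_def
  by (intro integrable_divide Bochner_Integration.integrable_sum integrable_mult_right integrable_norm_mult_sq)

lemma integral_slope_integrand:
  "integral\<^sup>L HD slope_integrand = sec_moment pH * (\<Sum>k<m. (norm (bit_contrast_vec m p x k))\<^sup>2) / ln 2"
  unfolding slope_integrand_def
  by (simp add: Bochner_Integration.integral_sum integrable_norm_mult_sq integral_norm_mult_sq
      sum_distrib_left sum_divide_distrib)

lemma bit_mi_given_bounds_mi_bound:
  assumes "k < m" "N0 > 0"
  shows "0 \<le> bit_mi_given m p x k h N0" "bit_mi_given m p x k h N0 \<le> mi_bound h / N0"
  using bit_mi_given_bounds[OF assms(1) assms(2), of x h] assms(2)
  by (auto simp: mi_bound_def field_simps zero_le_mult_iff)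

lemma integrable_bit_mi_given: "k < m \<Longrightarrow> N0 > 0 \<Longrightarrow> integrable HD (\<lambda>h. bit_mi_given m p x k h N0)"
proof (rule Bochner_Integration.integrable_bound[OF integrable_divide[OF integrable_mi_bound, of N0]])
  assume "k < m" "N0 > 0"
  note bounds = bit_mi_given_bounds_mi_bound[OF this]
  show "AE h in HD. norm (bit_mi_given m p x k h N0) \<le> norm (mi_bound h / N0)"
  proof (intro AE_I2)
    fix h
    have "0 \<le> mi_bound h / N0" using bounds(1,2)[of h] by linarith
    then show "norm (bit_mi_given m p x k h N0) \<le> norm (mi_bound h / N0)"
      using bounds(1,2)[of h] by (simp only: real_norm_def abs_of_nonneg)
  qed
qed (intro measurable_HD bit_mi_given_measurable)

lemma bicm_gmi_eq_integral: "N0 > 0 \<Longrightarrow> bicm_gmi m p x N0 HD = (\<integral>h. gmi_given h N0 \<partial>HD)"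
  unfolding bicm_gmi_def bit_mi_def gmi_given_def bit_mi_given_def[symmetric]
  by (rule Bochner_Integration.integral_sum[symmetric]) (simp add: integrable_bit_mi_given)

lemma tendsto_integral_gmi_given:
  "((\<lambda>N0. \<integral>h. N0 * gmi_given h N0 \<partial>HD) \<longlongrightarrow> integral\<^sup>L HD slope_integrand) at_top"
proof (rule integral_dominated_convergence_at_top[where w = "\<lambda>h. real m * mi_bound h"])
  show "(\<lambda>h. N0 * gmi_given h N0) \<in> borel_measurable HD" for N0
    unfolding gmi_given_def
    by (intro borel_measurable_times borel_measurable_const borel_measurable_sum measurable_HD
        bit_mi_given_measurable)
  show "slope_integrand \<in> borel_measurable HD"
    unfolding slope_integrand_def
    by (intro borel_measurable_sum borel_measurable_divide borel_measurable_const
        borel_measurable_integrable integrable_norm_mult_sq)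
  show "integrable HD (\<lambda>h. real m * mi_bound h)"
    by (intro integrable_mult_right integrable_mi_bound)
  show "AE h in HD. ((\<lambda>N0. N0 * gmi_given h N0) \<longlongrightarrow> slope_integrand h) at_top"
    unfolding gmi_given_def slope_integrand_def sum_distrib_left
    by (intro AE_I2 tendsto_sum tendsto_bit_mi_given) simp
  show "\<forall>\<^sub>F N0 in at_top. AE h in HD. norm (N0 * gmi_given h N0) \<le> real m * mi_bound h"
    using eventually_gt_at_top[of 0]
  proof eventually_elim
    case (elim N0)
    have "0 \<le> N0 * gmi_given h N0 \<and> N0 * gmi_given h N0 \<le> real m * mi_bound h" for h
    proof -
      have "0 \<le> N0 * bit_mi_given m p x k h N0 \<and> N0 * bit_mi_given m p x k h N0 \<le> mi_bound h"
        if "k < m" for k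
        using bit_mi_given_bounds_mi_bound[OF that elim, of h] elim by (simp add: field_simps)
      then show ?thesis
        unfolding gmi_given_def sum_distrib_left
        using sum_mono[of "{..<m}" "\<lambda>k. N0 * bit_mi_given m p x k h N0" "\<lambda>_. mi_bound h"]
        by (auto intro: sum_nonneg)
    qed
    then show ?case by (intro AE_I2) simp
  qed
qed

lemma tendsto_gmi_of_snr_div:
  assumes "energy_sym m p x > 0" and "sec_moment pH > 0"
  shows "((\<lambda>s. gmi_of_snr m p x (sec_moment pH) HD s / s)
    \<longlongrightarrow> (\<Sum>k<m. (norm (bit_contrast_vec m p x k))\<^sup>2) / (energy_sym m p x * ln 2)) (at_right 0)"
proof -
  define c where "c = sec_moment pH * energy_sym m p x"
  have c: "c > 0" using assms by (simp add: c_def)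
  have "filterlim (\<lambda>s. c / s) at_top (at_right 0)"
    using filterlim_tendsto_pos_mult_at_top[OF tendsto_const c filterlim_inverse_at_top_right]
    by (simp add: divide_inverse)
  from filterlim_compose[OF tendsto_integral_gmi_given this]
  have lim: "((\<lambda>s. (\<integral>h. c / s * gmi_given h (c / s) \<partial>HD) / c) \<longlongrightarrow> integral\<^sup>L HD slope_integrand / c)
      (at_right 0)"
    using c by (intro tendsto_divide tendsto_const) simp_all
  have limit: "integral\<^sup>L HD slope_integrand / c
      = (\<Sum>k<m. (norm (bit_contrast_vec m p x k))\<^sup>2) / (energy_sym m p x * ln 2)"
    using assms by (simp add: integral_slope_integrand c_def field_simps)
  \<comment> \<open>For \<open>s > 0\<close> the noise level is \<open>N0 = c / s\<close>.\<close>
  have "\<forall>\<^sub>F s in at_right 0.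
      (\<integral>h. c / s * gmi_given h (c / s) \<partial>HD) / c = gmi_of_snr m p x (sec_moment pH) HD s / s"
    using eventually_at_right_less[of 0]
  proof eventually_elim
    case (elim s)
    then have "gmi_of_snr m p x (sec_moment pH) HD s = (\<integral>h. gmi_given h (c / s) \<partial>HD)"
      using c by (simp add: gmi_of_snr_def c_def bicm_gmi_eq_integral)
    then show ?case using c elim by (simp add: field_simps)
  qed
  from Lim_transform_eventually[OF lim this] show ?thesis unfolding limit .
qed

end


lemma has_real_derivative_at_0_right_iff:
  fixes g :: "real \<Rightarrow> real"
  assumes "g 0 = 0" and "((\<lambda>s. g s / s) \<longlongrightarrow> L) (at_right 0)"
  shows "(g has_real_derivative a) (at 0 within {0..}) \<longleftrightarrow> a = L"
proof -
  have "(g has_real_derivative a) (at 0 within {0..}) \<longleftrightarrow> ((\<lambda>s. g s / s) \<longlongrightarrow> a) (at_right 0)"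
    unfolding has_field_derivative_iff at_within_Ici_at_right by (simp add: assms(1))
  then show ?thesis
    using assms(2) tendsto_unique[OF trivial_limit_at_right_real] by blast
qed

lemma gauss_ch_zero_noise: "gauss_ch 0 h xv y = 0"
  by (simp add: gauss_ch_def)

lemma bicm_gmi_zero_noise: "bicm_gmi m p x 0 HD = 0"
  by (simp add: bicm_gmi_def bit_mi_def cond_dens_def gauss_ch_zero_noise)

lemma gmi_of_snr_zero_energy:
  "energy_sym m p x = 0 \<Longrightarrow> gmi_of_snr m p x EH2 HD = (\<lambda>_. 0)"
  by (simp add: fun_eq_iff gmi_of_snr_def bicm_gmi_zero_noise)

lemma energy_sym_nonneg: "\<forall>k<m. 0 \<le> p k \<and> p k \<le> 1 \<Longrightarrow> 0 \<le> energy_sym m p x"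
  unfolding energy_sym_def by (intro sum_nonneg mult_nonneg_nonneg symprob_nonneg) auto

text \<open>For \<open>E\<^sub>s = 0\<close> both sides vanish: the GMI is identically \<open>0\<close>, and so is the quotient,
  by \<open>x / 0 = 0\<close>.\<close>
lemma low_gmi_alpha_iff:
  assumes "\<forall>k<m. 0 < p k \<and> p k < 1" and "fading HD pH" and "sec_moment pH > 0"
  shows "low_gmi_alpha m p x (sec_moment pH) HD a
    \<longleftrightarrow> a = (\<Sum>k<m. (norm (bit_contrast_vec m p x k))\<^sup>2) / (energy_sym m p x * ln 2)"
proof (cases "energy_sym m p x = 0")
  case True
  have "((\<lambda>s. 0 / s :: real) \<longlongrightarrow> 0) (at_right 0)"
    by simp
  from has_real_derivative_at_0_right_iff[OF _ this] show ?thesis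
    unfolding low_gmi_alpha_def gmi_of_snr_zero_energy[OF True] by (simp add: True)
next
  case False
  interpret bicm_fading m p HD pH x
    using assms(1,2) by (intro bicm_fading.intro interior_bit_probs.intro)
  from False have "energy_sym m p x > 0"
    using energy_sym_nonneg[of m p x] assms(1) by fastforce
  then show ?thesis
    unfolding low_gmi_alpha_def using assms(3)
    by (intro has_real_derivative_at_0_right_iff tendsto_gmi_of_snr_div) (auto simp: gmi_of_snr_def)
qed

theorem theorem6:
  fixes m :: nat and p :: "nat \<Rightarrow> real" and x :: "nat \<Rightarrow> real ^ 'n"
    and HD :: "(real ^ 'n) measure" and pH :: "real \<Rightarrow> real"
  assumes "m \<ge> 1"
    and "\<forall>k<m. 0 < p k \<and> p k < 1"
    and "prob_space HD" and "sets HD = sets borel"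
    and "pH \<in> borel_measurable borel" and "\<forall>t. 0 \<le> pH t"
    and "\<forall>n. distr HD lborel (\<lambda>h. h $ n) = density lborel (\<lambda>t. ennreal (pH t))"
    and "integrable lborel (\<lambda>t. t\<^sup>2 * pH t)" and "sec_moment pH > 0"
  shows "mean_sym m p x = mean_sym m uniform_bits (transform m p x)
       \<and> energy_sym m p x = energy_sym m uniform_bits (transform m p x)
       \<and> (\<forall>a. low_gmi_alpha m p x (sec_moment pH) HD a
              \<longleftrightarrow> low_gmi_alpha m uniform_bits (transform m p x) (sec_moment pH) HD a)"
proof -
  have closed: "\<forall>k<m. 0 \<le> p k \<and> p k \<le> 1"
    using assms(2) by (auto intro: less_imp_le)
  have uniform: "\<forall>k<m. 0 < uniform_bits k \<and> uniform_bits k < 1"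
    by (simp add: uniform_bits_def)
  have fading: "fading HD pH"
    using assms(4-8) by unfold_locales
  have "(\<Sum>k<m. (norm (bit_contrast_vec m uniform_bits (transform m p x) k))\<^sup>2)
      = (\<Sum>k<m. (norm (bit_contrast_vec m p x k))\<^sup>2)"
    by (intro sum.cong refl) (simp add: bit_contrast_vec_transform[OF assms(2)])
  then show ?thesis
    using mean_sym_transform[OF closed, of x] energy_sym_transform[OF closed, of x]
      low_gmi_alpha_iff[OF assms(2) fading assms(9)]
      low_gmi_alpha_iff[where x = "transform m p x", OF uniform fading assms(9)]
    by simp
qed

end
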